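(* Let $\mathcal{M}$ be a $W^*$-algebra and let $\mathcal{G}(\mathcal{M})\subset\mathcal{M}$ be the set of partially invertible elements. Then $\mathcal{G}(\mathcal{M})$ is a groupoid with base set $\mathcal{L}(\mathcal{M})$ when equipped with the following structure: (i) the identity section $\varepsilon:\mathcal{L}(\mathcal{M})\hookrightarrow\mathcal{G}(\mathcal{M})$ is the inclusion; (ii) the source and target maps are $\mathbf{s}(x):=r(x)=u^*u$ and $\mathbf{t}(x):=l(x)=uu^*$, where $x=u|x|$ is the polar decomposition; (iii) the product on the set of composable pairs $\mathcal{G}(\mathcal{M})^{(2)}=\{(x,y)\in\mathcal{G}(\mathcal{M})\times\mathcal{G}(\mathcal{M}):\ \mathbf{s}(x)=\mathbf{t}(y)\}$ is $(x,y)\mapsto xy$, the product in $\mathcal{M}$; (iv) the inverse map is $\iota(x):=|x|^{-1}u^*$, where $|x|^{-1}$ is the inverse of $|x|$ in $p\mathcal{M}p$, $p=s(|x|)$.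
   Context: $\mathcal{M}$ is a $W^*$-algebra (von Neumann algebra) with unit $1$. $\mathcal{L}(\mathcal{M})$ is the set of orthogonal projections $p=p^*=p^2\in\mathcal{M}$. For $x\in\mathcal{M}$, the left support $l(x)$ (resp. right support $r(x)$) is the smallest projection $e\in\mathcal{L}(\mathcal{M})$ with $ex=x$ (resp. $xe=x$); for self-adjoint $x$ one writes $s(x):=l(x)=r(x)$. Every $x\in\mathcal{M}$ has a unique polar decomposition $x=u|x|$ with $|x|=(x^*x)^{1/2}$ and $u$ a partial isometry with $u^*u=r(x)=s(|x|)$, $uu^*=l(x)$. For $p\in\mathcal{L}(\mathcal{M})$, $p\mathcal{M}p$ is a $W^*$-algebra with unit $p$. The set of partially invertible elements is $\mathcal{G}(\mathcal{M}):=\{x\in\mathcal{M}:\ |x|\text{ is invertible in }p\mathcal{M}p,\ \text{where }p=s(|x|)\}$. A groupoid over a base set $B$ is a set $G$ with source and target maps $\mathbf{s},\mathbf{t}:G\to B$, an associative product defined on pairs $(g,h)$ with $\mathbf{s}(g)=\mathbf{t}(h)$ satisfying $\mathbf{s}(gh)=\mathbf{s}(h)$, $\mathbf{t}(gh)=\mathbf{t}(g)$, an injective identity section $\varepsilon:B\to G$ with $\varepsilon(\mathbf{t}(g))g=g=g\varepsilon(\mathbf{s}(g))$, and an inversion $\iota$ with $\iota(g)g=\varepsilon(\mathbf{s}(g))$, $g\iota(g)=\varepsilon(\mathbf{t}(g))$. *)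

theory Defs
  imports Complex_Main
begin

text \<open>A complex Hilbert space: a real Banach space with a compatible complex scalar
multiplication and a complex inner product (linear in the second argument,
conjugate-linear in the first) inducing the norm.\<close>

class chilbert = banach +
  fixes cscale :: "complex \<Rightarrow> 'a \<Rightarrow> 'a"
    and cinner :: "'a \<Rightarrow> 'a \<Rightarrow> complex"
  assumes cscale_of_real: "cscale (of_real r) x = scaleR r x"
    and cscale_add_right: "cscale a (x + y) = cscale a x + cscale a y"
    and cscale_add_left: "cscale (a + b) x = cscale a x + cscale b x"
    and cscale_cscale: "cscale a (cscale b x) = cscale (a * b) x"
    and cinner_conj: "cinner x y = cnj (cinner y x)"
    and cinner_add_right: "cinner x (y + z) = cinner x y + cinner x z"
    and cinner_cscale_right: "cinner x (cscale a y) = a * cinner x y"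
    and cinner_self: "cinner x x = complex_of_real ((norm x)\<^sup>2)"

definition bounded_op :: "('h::chilbert \<Rightarrow> 'h) \<Rightarrow> bool" where
  "bounded_op T \<longleftrightarrow> bounded_linear T \<and> (\<forall>a h. T (cscale a h) = cscale a (T h))"

definition adj :: "('h::chilbert \<Rightarrow> 'h) \<Rightarrow> ('h \<Rightarrow> 'h)" where
  "adj T = (THE S. \<forall>x y. cinner (T x) y = cinner x (S y))"

definition commutant :: "('h::chilbert \<Rightarrow> 'h) set \<Rightarrow> ('h \<Rightarrow> 'h) set" where
  "commutant S = {T. bounded_op T \<and> (\<forall>A\<in>S. T \<circ> A = A \<circ> T)}"

text \<open>A W*-algebra, realised concretely as a von Neumann algebra: a unital
*-subalgebra of the bounded operators on a complex Hilbert space that equals its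
double commutant.\<close>

definition von_neumann_algebra :: "('h::chilbert \<Rightarrow> 'h) set \<Rightarrow> bool" where
  "von_neumann_algebra M \<longleftrightarrow>
     (\<forall>T\<in>M. bounded_op T) \<and> id \<in> M \<and>
     (\<forall>S\<in>M. \<forall>T\<in>M. (\<lambda>h. S h + T h) \<in> M) \<and>
     (\<forall>a. \<forall>T\<in>M. (\<lambda>h. cscale a (T h)) \<in> M) \<and>
     (\<forall>S\<in>M. \<forall>T\<in>M. S \<circ> T \<in> M) \<and>
     (\<forall>T\<in>M. adj T \<in> M) \<and>
     commutant (commutant M) = M"

definition projections :: "('h::chilbert \<Rightarrow> 'h) set \<Rightarrow> ('h \<Rightarrow> 'h) set" where
  "projections M = {p\<in>M. adj p = p \<and> p \<circ> p = p}"

text \<open>Left support: smallest projection e (w.r.t. the order e \<le> f iff f e = e)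
with e x = x; right support: smallest projection e with x e = x.\<close>

definition lsupp :: "('h::chilbert \<Rightarrow> 'h) set \<Rightarrow> ('h \<Rightarrow> 'h) \<Rightarrow> ('h \<Rightarrow> 'h)" where
  "lsupp M x = (THE e. e \<in> projections M \<and> e \<circ> x = x \<and>
                   (\<forall>f\<in>projections M. f \<circ> x = x \<longrightarrow> f \<circ> e = e))"

definition rsupp :: "('h::chilbert \<Rightarrow> 'h) set \<Rightarrow> ('h \<Rightarrow> 'h) \<Rightarrow> ('h \<Rightarrow> 'h)" where
  "rsupp M x = (THE e. e \<in> projections M \<and> x \<circ> e = x \<and>
                   (\<forall>f\<in>projections M. x \<circ> f = x \<longrightarrow> f \<circ> e = e))"

definition supp :: "('h::chilbert \<Rightarrow> 'h) set \<Rightarrow> ('h \<Rightarrow> 'h) \<Rightarrow> ('h \<Rightarrow> 'h)" where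
  "supp M x = lsupp M x"

definition positive_op :: "('h::chilbert \<Rightarrow> 'h) \<Rightarrow> bool" where
  "positive_op a \<longleftrightarrow> (\<forall>h. Im (cinner h (a h)) = 0 \<and> 0 \<le> Re (cinner h (a h)))"

definition absv :: "('h::chilbert \<Rightarrow> 'h) set \<Rightarrow> ('h \<Rightarrow> 'h) \<Rightarrow> ('h \<Rightarrow> 'h)" where
  "absv M x = (THE a. a \<in> M \<and> positive_op a \<and> a \<circ> a = adj x \<circ> x)"

definition polar :: "('h::chilbert \<Rightarrow> 'h) set \<Rightarrow> ('h \<Rightarrow> 'h) \<Rightarrow> ('h \<Rightarrow> 'h)" where
  "polar M x = (THE u. u \<in> M \<and> x = u \<circ> absv M x \<and>
                   adj u \<circ> u = rsupp M x \<and> u \<circ> adj u = lsupp M x)"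

text \<open>Inverse of a in the corner algebra pMp (with unit p).\<close>
definition is_inverse_in_corner ::
  "('h::chilbert \<Rightarrow> 'h) set \<Rightarrow> ('h \<Rightarrow> 'h) \<Rightarrow> ('h \<Rightarrow> 'h) \<Rightarrow> ('h \<Rightarrow> 'h) \<Rightarrow> bool" where
  "is_inverse_in_corner M p a b \<longleftrightarrow> b \<in> M \<and> p \<circ> b \<circ> p = b \<and> b \<circ> a = p \<and> a \<circ> b = p"

definition corner_inv :: "('h::chilbert \<Rightarrow> 'h) set \<Rightarrow> ('h \<Rightarrow> 'h) \<Rightarrow> ('h \<Rightarrow> 'h) \<Rightarrow> ('h \<Rightarrow> 'h)" where
  "corner_inv M p a = (THE b. is_inverse_in_corner M p a b)"

definition partially_invertible :: "('h::chilbert \<Rightarrow> 'h) set \<Rightarrow> ('h \<Rightarrow> 'h) set" where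
  "partially_invertible M =
     {x\<in>M. \<exists>b. is_inverse_in_corner M (supp M (absv M x)) (absv M x) b}"

definition pinv :: "('h::chilbert \<Rightarrow> 'h) set \<Rightarrow> ('h \<Rightarrow> 'h) \<Rightarrow> ('h \<Rightarrow> 'h)" where
  "pinv M x = corner_inv M (supp M (absv M x)) (absv M x) \<circ> adj (polar M x)"

definition groupoid ::
  "'g set \<Rightarrow> 'b set \<Rightarrow> ('g \<Rightarrow> 'b) \<Rightarrow> ('g \<Rightarrow> 'b) \<Rightarrow> ('g \<Rightarrow> 'g \<Rightarrow> 'g)
   \<Rightarrow> ('b \<Rightarrow> 'g) \<Rightarrow> ('g \<Rightarrow> 'g) \<Rightarrow> bool" where
  "groupoid G B src tgt mult eps iota \<longleftrightarrow>
     (\<forall>g\<in>G. src g \<in> B \<and> tgt g \<in> B) \<and>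
     (\<forall>g\<in>G. \<forall>h\<in>G. src g = tgt h \<longrightarrow>
        mult g h \<in> G \<and> src (mult g h) = src h \<and> tgt (mult g h) = tgt g) \<and>
     (\<forall>g\<in>G. \<forall>h\<in>G. \<forall>k\<in>G. src g = tgt h \<and> src h = tgt k \<longrightarrow>
        mult (mult g h) k = mult g (mult h k)) \<and>
     (\<forall>b\<in>B. eps b \<in> G \<and> src (eps b) = b \<and> tgt (eps b) = b) \<and>
     inj_on eps B \<and>
     (\<forall>g\<in>G. mult (eps (tgt g)) g = g \<and> mult g (eps (src g)) = g) \<and>
     (\<forall>g\<in>G. iota g \<in> G \<and> src (iota g) = tgt g \<and> tgt (iota g) = src g \<and>
        mult (iota g) g = eps (src g) \<and> mult g (iota g) = eps (tgt g))"

end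

theory Submission
  imports Defs "HOL-Analysis.Analysis" "HOL-Computational_Algebra.Formal_Power_Series"
begin

(*
  An element x of M is partially invertible exactly when it has a Moore-Penrose inverse y in M:
  xy and yx are projections, xyx = x and yxy = y; then r(x) = yx and l(x) = xy. Indeed
  iota(x) = |x|^-1 u* = |x|^-2 x* is such a y; conversely, given y, the operator yy* inverts
  |x|^2 = x*x in the corner r(x) M r(x) and commutes with |x|, so |x| yy* inverts |x| there.
  Moore-Penrose inverses multiply along composable pairs, which yields the groupoid laws.

  Supports, moduli and polar decompositions are defined by definite description, so their
  existence has to be proved: left supports are orthogonal projections onto closures of ranges,
  which lie in M because M = M'', and positive square roots are sums of the binomial series
  of sqrt (1 - t).
*)

lemma cinner_add_left: "cinner (x + y) z = cinner x z + cinner y z"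
  by (metis cinner_conj cinner_add_right complex_cnj_add)

lemma cinner_cscale_left: "cinner (cscale a x) y = cnj a * cinner x y"
  by (metis cinner_conj cinner_cscale_right complex_cnj_mult complex_cnj_cnj)

lemma cinner_zero_right [simp]: "cinner x 0 = 0"
  using cinner_add_right[of x 0 0] by simp

lemma cinner_zero_left [simp]: "cinner 0 x = 0"
  using cinner_add_left[of 0 0 x] by simp

lemma cinner_minus_right: "cinner x (- y) = - cinner x y"
  using cinner_add_right[of x y "-y"] by (simp add: add_eq_0_iff)

lemma cinner_minus_left: "cinner (- x) y = - cinner x y"
  using cinner_add_left[of x "-x" y] by (simp add: add_eq_0_iff)

lemma cinner_diff_right: "cinner x (y - z) = cinner x y - cinner x z"
  using cinner_add_right[of x y "-z"] cinner_minus_right[of x z] by simp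

lemma cinner_diff_left: "cinner (x - y) z = cinner x z - cinner y z"
  using cinner_add_left[of x "-y" z] cinner_minus_left[of y z] by simp

lemma cinner_scaleR_right: "cinner x (r *\<^sub>R y) = of_real r * cinner x y"
  by (metis cinner_cscale_right cscale_of_real)

lemma cinner_scaleR_left: "cinner (r *\<^sub>R x) y = of_real r * cinner x y"
  by (metis cinner_cscale_left cscale_of_real complex_cnj_complex_of_real)

lemma cinner_self_eq_0 [simp]: "cinner x x = 0 \<longleftrightarrow> x = 0"
  by (simp add: cinner_self)

lemma cscale_zero_right [simp]: "cscale a 0 = 0"
  using cscale_add_right[of a 0 0] by simp

lemma cscale_zero_left [simp]: "cscale 0 x = 0"
  using cscale_of_real[of 0 x] by simp

lemma cscale_one [simp]: "cscale 1 x = x"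
  using cscale_of_real[of 1 x] by simp

lemma cscale_minus_right: "cscale a (- x) = - cscale a x"
  using cscale_add_right[of a x "-x"] by (simp add: add_eq_0_iff)

lemma cscale_diff_right: "cscale a (x - y) = cscale a x - cscale a y"
  using cscale_add_right[of a x "-y"] cscale_minus_right[of a y] by simp

lemma cscale_minus_left: "cscale (- a) x = - cscale a x"
  using cscale_add_left[of a "-a" x] by (simp add: add_eq_0_iff)

lemma cscale_scaleR_commute: "cscale a (r *\<^sub>R x) = r *\<^sub>R cscale a x"
  by (metis cscale_cscale cscale_of_real mult.commute)

lemma cinner_ext: "(\<And>z. cinner z x = cinner z y) \<Longrightarrow> x = y"
  by (metis cinner_diff_right cinner_self_eq_0 eq_iff_diff_eq_0)

lemma norm_cscale: "norm (cscale a x) = cmod a * norm x"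
proof -
  have "(norm (cscale a x))\<^sup>2 = Re (cinner (cscale a x) (cscale a x))"
    by (simp add: cinner_self)
  also have "\<dots> = Re (cnj a * a * cinner x x)"
    by (simp only: cinner_cscale_left cinner_cscale_right mult_ac)
  also have "cnj a * a = of_real ((cmod a)\<^sup>2)"
    using complex_norm_square[of a] by (simp add: mult.commute)
  also have "Re (of_real ((cmod a)\<^sup>2) * cinner x x) = (cmod a)\<^sup>2 * (norm x)\<^sup>2"
    by (simp add: cinner_self)
  finally have "(norm (cscale a x))\<^sup>2 = (cmod a * norm x)\<^sup>2"
    by (simp add: power_mult_distrib)
  then show ?thesis by (simp add: power2_eq_iff_nonneg)
qed

lemma power2_norm_add:
  "(norm (x + y))\<^sup>2 = (norm x)\<^sup>2 + (norm y)\<^sup>2 + 2 * Re (cinner x y)"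
proof -
  have "(norm (x + y))\<^sup>2 = Re (cinner (x + y) (x + y))" by (simp add: cinner_self)
  also have "\<dots> = Re (cinner x x) + Re (cinner y y) + Re (cinner x y) + Re (cinner y x)"
    by (simp add: cinner_add_left cinner_add_right)
  also have "Re (cinner y x) = Re (cinner x y)" by (subst cinner_conj) simp
  finally show ?thesis by (simp add: cinner_self)
qed

lemma power2_norm_diff:
  "(norm (x - y))\<^sup>2 = (norm x)\<^sup>2 + (norm y)\<^sup>2 - 2 * Re (cinner x y)"
  using power2_norm_add[of x "-y"] by (simp add: cinner_minus_right)

lemma parallelogram_law:
  fixes x y :: "'h::chilbert"
  shows   "(norm (x - y))\<^sup>2 + (norm (x + y))\<^sup>2 = 2 * (norm x)\<^sup>2 + 2 * (norm y)\<^sup>2"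
  using power2_norm_add[of x y] power2_norm_diff[of x y] by simp

lemma Re_cinner_le: "Re (cinner x y) \<le> norm x * norm y"
proof -
  have "(norm (x + y))\<^sup>2 \<le> (norm x + norm y)\<^sup>2"
    by (simp add: norm_triangle_ineq power_mono)
  then show ?thesis unfolding power2_norm_add by (simp add: power2_sum)
qed

lemma cinner_Cauchy_Schwarz: "cmod (cinner x y) \<le> norm x * norm y"
proof (cases "cinner x y = 0")
  case True
  then show ?thesis by simp
next
  case False
  define u where "u = cnj (cinner x y) / of_real (cmod (cinner x y))"
  have u1: "cmod u = 1" using False by (simp add: u_def norm_divide)
  have "cinner x (cscale u y) = of_real (cmod (cinner x y))"
    using False by (simp add: cinner_cscale_right u_def complex_mult_cnj[symmetric] field_simps
        cmod_power2 complex_norm_square[symmetric] power2_eq_square)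
  then have "cmod (cinner x y) = Re (cinner x (cscale u y))" by simp
  also have "\<dots> \<le> norm x * norm (cscale u y)" by (rule Re_cinner_le)
  also have "\<dots> = norm x * norm y" by (simp add: norm_cscale u1)
  finally show ?thesis .
qed

lemma bounded_linear_cinner_right: "bounded_linear (cinner x)"
  by (rule bounded_linear_intro[where K="norm x"])
    (auto simp: cinner_add_right cinner_scaleR_right scaleR_conv_of_real,
      metis cinner_Cauchy_Schwarz mult.commute)

lemma bounded_linear_cscale: "bounded_linear (cscale a)"
  by (rule bounded_linear_intro[where K="cmod a"])
    (auto simp: cscale_add_right cscale_scaleR_commute norm_cscale mult.commute)

lemma quadratic_nonneg_imp_discriminant_le:
  fixes A B C :: real
  assumes "\<And>s. 0 \<le> A - 2 * s * B + s\<^sup>2 * C" "0 \<le> C"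
  shows "B\<^sup>2 \<le> A * C"
proof (cases "C = 0")
  case True
  have "B = 0"
  proof (rule ccontr)
    assume "B \<noteq> 0"
    have "0 \<le> A - 2 * ((A + 1) / (2 * B)) * B + ((A + 1) / (2 * B))\<^sup>2 * C" by (rule assms)
    then show False using True \<open>B \<noteq> 0\<close> by (simp add: field_simps)
  qed
  then show ?thesis using True by simp
next
  case False
  then have C: "C > 0" using assms(2) by simp
  have "0 \<le> A - 2 * (B / C) * B + (B / C)\<^sup>2 * C" by (rule assms)
  also have "\<dots> = (A * C - B\<^sup>2) / C" using C by (simp add: field_simps power2_eq_square)
  finally show ?thesis using C by (simp add: zero_le_divide_iff)
qed


section \<open>Orthogonal projection onto a closed subspace\<close>

definition csubspace :: "'h::chilbert set \<Rightarrow> bool" where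
  "csubspace V \<longleftrightarrow> 0 \<in> V \<and> (\<forall>x\<in>V. \<forall>y\<in>V. x + y \<in> V) \<and> (\<forall>a. \<forall>x\<in>V. cscale a x \<in> V)"

lemma csubspace_diff: "csubspace V \<Longrightarrow> x \<in> V \<Longrightarrow> y \<in> V \<Longrightarrow> x - y \<in> V"
  unfolding csubspace_def by (metis cscale_minus_left cscale_one diff_conv_add_uminus)

lemma csubspace_scaleR: "csubspace V \<Longrightarrow> x \<in> V \<Longrightarrow> r *\<^sub>R x \<in> V"
  unfolding csubspace_def by (metis cscale_of_real)

lemma closed_orthogonal_complement:
  fixes K :: "'h::chilbert set"
  shows "closed {h. \<forall>k\<in>K. cinner k h = 0}"
proof -
  have "{h. \<forall>k\<in>K. cinner k h = 0} = (\<Inter>k\<in>K. cinner k -` {0})" by auto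
  moreover have "closed (cinner k -` {0})" for k :: 'h
    by (rule continuous_closed_vimage) (auto intro: linear_continuous_at bounded_linear_cinner_right)
  ultimately show ?thesis by auto
qed

lemma csubspace_orthogonal_complement: "csubspace {h. \<forall>k\<in>K. cinner k h = 0}"
  unfolding csubspace_def by (auto simp: cinner_add_right cinner_cscale_right)

lemma minimizing_sequence_Cauchy:
  assumes V: "csubspace V" and vV: "\<And>n. v n \<in> V"
    and D: "\<And>u. u \<in> V \<Longrightarrow> D \<le> (norm (h - u))\<^sup>2"
    and vD: "\<And>n. (norm (h - v n))\<^sup>2 < D + 1 / Suc n"
  shows "Cauchy v"
proof (rule metric_CauchyI)
  have close: "(norm (v m - v n))\<^sup>2 \<le> 2 / Suc m + 2 / Suc n" for m n
  proof -
    have "(1/2::real) *\<^sub>R (v m + v n) \<in> V"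
      using V vV by (auto simp: csubspace_def intro!: csubspace_scaleR)
    moreover have "(h - v n) + (h - v m) = 2 *\<^sub>R (h - (1/2::real) *\<^sub>R (v m + v n))"
      by (simp add: algebra_simps scaleR_2)
    ultimately have "4 * D \<le> (norm ((h - v n) + (h - v m)))\<^sup>2"
      using D by (simp add: power2_eq_square)
    moreover have "(norm (v m - v n))\<^sup>2 + (norm ((h - v n) + (h - v m)))\<^sup>2
        = 2 * (norm (h - v n))\<^sup>2 + 2 * (norm (h - v m))\<^sup>2"
      using parallelogram_law[of "h - v n" "h - v m"] by simp
    ultimately show ?thesis using vD[of m] vD[of n] by linarith
  qed
  fix e :: real
  assume e: "e > 0"
  obtain N :: nat where N: "4 / e\<^sup>2 < N" using reals_Archimedean2 by blast
  then have "N > 0" using e by (metis gr0I of_nat_0 zero_less_divide_iff zero_less_numeral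
        zero_less_power not_less_iff_gr_or_eq)
  show "\<exists>M. \<forall>m\<ge>M. \<forall>n\<ge>M. dist (v m) (v n) < e"
  proof (intro exI allI impI)
    fix m n assume mn: "N \<le> m" "N \<le> n"
    have "2 / real (Suc m) \<le> 2 / N" "2 / real (Suc n) \<le> 2 / N"
      using mn \<open>N > 0\<close> by (auto intro!: divide_left_mono)
    then have "(norm (v m - v n))\<^sup>2 \<le> 4 / N" using close[of m n] by simp
    also have "\<dots> < e\<^sup>2" using N e \<open>N > 0\<close> by (simp add: field_simps)
    finally show "dist (v m) (v n) < e"
      using e by (simp add: dist_norm power_less_imp_less_base)
  qed
qed

lemma closest_point_in_subspace_exists:
  assumes V: "csubspace V" "closed V"
  obtains p where "p \<in> V" "\<And>v. v \<in> V \<Longrightarrow> norm (h - p) \<le> norm (h - v)"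
proof -
  define S where "S = (\<lambda>v. (norm (h - v))\<^sup>2) ` V"
  have "S \<noteq> {}" using V by (auto simp: S_def csubspace_def)
  have "bdd_below S" unfolding S_def by (rule bdd_belowI[where m=0]) auto
  then have D: "Inf S \<le> (norm (h - v))\<^sup>2" if "v \<in> V" for v
    using that by (auto simp: S_def intro: cInf_lower)
  have "\<exists>v. v \<in> V \<and> (norm (h - v))\<^sup>2 < Inf S + 1 / Suc n" for n :: nat
    using cInf_lessD[OF \<open>S \<noteq> {}\<close>, of "Inf S + 1 / Suc n"] by (auto simp: S_def)
  then obtain v where vV: "\<And>n. v n \<in> V" and vD: "\<And>n. (norm (h - v n))\<^sup>2 < Inf S + 1 / Suc n"
    by metis
  from minimizing_sequence_Cauchy[OF V(1) vV D vD] obtain p where p: "v \<longlonglongrightarrow> p"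
    using Cauchy_convergent_iff convergent_def by blast
  have pV: "p \<in> V" using V(2) vV p closed_sequentially by blast
  have "(\<lambda>n. (norm (h - v n))\<^sup>2) \<longlonglongrightarrow> (norm (h - p))\<^sup>2"
    by (intro tendsto_intros p)
  moreover have "(\<lambda>n. Inf S + 1 / Suc n) \<longlonglongrightarrow> Inf S + 0"
    by (intro tendsto_intros LIMSEQ_Suc[OF lim_inverse_n'])
  ultimately have "(norm (h - p))\<^sup>2 \<le> Inf S + 0"
    by (rule LIMSEQ_le) (use vD less_imp_le in auto)
  then have "norm (h - p) \<le> norm (h - v)" if "v \<in> V" for v
    using D[OF that] by (simp add: power2_le_imp_le)
  with pV show ?thesis by (rule that)
qed

lemma closest_point_orthogonal:
  assumes V: "csubspace V" and p: "p \<in> V" and closest: "\<And>v. v \<in> V \<Longrightarrow> norm (h - p) \<le> norm (h - v)"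
    and v: "v \<in> V"
  shows "cinner v (h - p) = 0"
proof -
  have Re0: "Re (cinner (h - p) w) = 0" if w: "w \<in> V" for w
  proof -
    have "(Re (cinner (h - p) w))\<^sup>2 \<le> 0 * (norm w)\<^sup>2"
    proof (rule quadratic_nonneg_imp_discriminant_le)
      fix t :: real
      have "p + t *\<^sub>R w \<in> V"
        using csubspace_scaleR[OF V w] V p unfolding csubspace_def by blast
      then have "norm (h - p) \<le> norm ((h - p) - t *\<^sub>R w)"
        using closest by (simp add: algebra_simps)
      then have "(norm (h - p))\<^sup>2 \<le> (norm ((h - p) - t *\<^sub>R w))\<^sup>2"
        by (simp add: power_mono)
      then show "0 \<le> 0 - 2 * t * Re (cinner (h - p) w) + t\<^sup>2 * (norm w)\<^sup>2"
        by (simp add: power2_norm_diff cinner_scaleR_right power_mult_distrib)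
    qed simp
    then show ?thesis by simp
  qed
  have "cscale \<i> v \<in> V" using V v by (auto simp: csubspace_def)
  from Re0[OF this] have "Im (cinner (h - p) v) = 0" by (simp add: cinner_cscale_right)
  with Re0[OF v] have "cinner (h - p) v = 0" by (simp add: complex_eq_iff)
  then show ?thesis by (subst cinner_conj) simp
qed

definition oproj :: "'h::chilbert set \<Rightarrow> 'h \<Rightarrow> 'h" where
  "oproj V h = (THE p. p \<in> V \<and> (\<forall>v\<in>V. cinner v (h - p) = 0))"

lemma oproj_eqI:
  assumes V: "csubspace V" and p: "p \<in> V" "\<And>v. v \<in> V \<Longrightarrow> cinner v (h - p) = 0"
  shows "oproj V h = p"
  unfolding oproj_def
proof (rule the_equality)
  show "p \<in> V \<and> (\<forall>v\<in>V. cinner v (h - p) = 0)" using p by blast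
  fix q assume q: "q \<in> V \<and> (\<forall>v\<in>V. cinner v (h - q) = 0)"
  have "q - p \<in> V" using csubspace_diff[OF V] q p by blast
  then have "cinner (q - p) ((h - p) - (h - q)) = 0"
    using p q by (simp add: cinner_diff_right)
  then show "q = p" by simp
qed

lemma
  assumes "csubspace V" "closed V"
  shows oproj_in: "oproj V h \<in> V"
    and oproj_orthogonal: "v \<in> V \<Longrightarrow> cinner v (h - oproj V h) = 0"
proof -
  obtain p where p: "p \<in> V" "\<And>v. v \<in> V \<Longrightarrow> norm (h - p) \<le> norm (h - v)"
    using closest_point_in_subspace_exists[OF assms] by blast
  have "oproj V h = p"
    by (intro oproj_eqI closest_point_orthogonal[OF assms(1) p] assms p)
  then show "oproj V h \<in> V" "v \<in> V \<Longrightarrow> cinner v (h - oproj V h) = 0"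
    using closest_point_orthogonal[OF assms(1) p] p by auto
qed

lemma riesz_representation:
  fixes \<phi> :: "'h::chilbert \<Rightarrow> complex"
  assumes lin: "bounded_linear \<phi>" and hom: "\<And>a x. \<phi> (cscale a x) = a * \<phi> x"
  shows "\<exists>z. \<forall>x. \<phi> x = cinner z x"
proof (cases "\<forall>x. \<phi> x = 0")
  case True
  then show ?thesis by (intro exI[of _ 0]) simp
next
  case False
  then obtain w where w: "\<phi> w \<noteq> 0" by blast
  interpret bounded_linear \<phi> by fact
  define K where "K = {x. \<phi> x = 0}"
  have Ksub: "csubspace K" unfolding K_def csubspace_def using hom by (auto simp: add zero)
  have Kcl: "closed K" unfolding K_def
    by (intro closed_Collect_eq continuous_on_const linear_continuous_on lin)
  define w0 where "w0 = w - oproj K w"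
  have "\<phi> (oproj K w) = 0" using oproj_in[OF Ksub Kcl] by (simp add: K_def)
  then have pw0: "\<phi> w0 \<noteq> 0" using w by (simp add: w0_def diff)
  then have w00: "w0 \<noteq> 0" using zero by auto
  have orth: "cinner v w0 = 0" if "v \<in> K" for v
    using oproj_orthogonal[OF Ksub Kcl that] by (simp add: w0_def)
  have "\<phi> x = cinner (cscale (cnj (\<phi> w0 / cinner w0 w0)) w0) x" for x
  proof -
    define y where "y = x - cscale (\<phi> x / \<phi> w0) w0"
    have "\<phi> y = 0" using pw0 by (simp add: y_def diff hom)
    then have "cinner y w0 = 0" by (intro orth) (simp add: K_def)
    then have "cinner w0 y = 0" by (subst cinner_conj) simp
    then have "cinner w0 x = \<phi> x / \<phi> w0 * cinner w0 w0"
      by (simp add: y_def cinner_diff_right cinner_cscale_right)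
    then show ?thesis using w00 pw0 by (simp add: cinner_cscale_left field_simps)
  qed
  then show ?thesis by blast
qed

lemma bounded_op_comp: "bounded_op S \<Longrightarrow> bounded_op T \<Longrightarrow> bounded_op (S \<circ> T)"
  unfolding bounded_op_def by (auto intro: bounded_linear_compose simp: o_def)

lemma bounded_op_linear:
  assumes "bounded_op T"
  shows "T (x + y) = T x + T y" "T (x - y) = T x - T y" "T 0 = 0" "T (- x) = - T x"
    "T (cscale a x) = cscale a (T x)" "T (r *\<^sub>R x) = r *\<^sub>R T x"
  using assms unfolding bounded_op_def by (auto simp: linear_simps)

lemma bounded_op_pos_bound:
  assumes "bounded_op T"
  obtains K where "\<And>x. norm (T x) \<le> norm x * K" "K > 0"
  using assms unfolding bounded_op_def using bounded_linear.pos_bounded by blast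

lemma adj_unique:
  assumes "\<And>x y. cinner (T x) y = cinner x (S y)"
  shows "adj T = S"
  unfolding adj_def
proof (rule the_equality)
  show "\<forall>x y. cinner (T x) y = cinner x (S y)" using assms by blast
  fix S' assume "\<forall>x y. cinner (T x) y = cinner x (S' y)"
  then show "S' = S" using assms by (intro ext cinner_ext) metis
qed

lemma cinner_adj_right:
  assumes T: "bounded_op T"
  shows "cinner (T x) y = cinner x (adj T y)"
proof -
  have "\<exists>z. \<forall>x. cinner (T x) y = cinner x z" for y
  proof -
    have "bounded_linear (\<lambda>x. cinner y (T x))"
      using T unfolding bounded_op_def
      by (auto intro: bounded_linear_compose[OF bounded_linear_cinner_right])
    then obtain z where "\<And>x. cinner y (T x) = cinner z x"
      using riesz_representation[of "\<lambda>x. cinner y (T x)"] T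
      by (auto simp: bounded_op_linear cinner_cscale_right)
    then show ?thesis by (metis cinner_conj)
  qed
  then obtain S where S: "\<And>x y. cinner (T x) y = cinner x (S y)" by metis
  then show ?thesis using adj_unique[OF S] by simp
qed

lemma cinner_adj_left: "bounded_op T \<Longrightarrow> cinner (adj T x) y = cinner x (T y)"
  by (metis cinner_adj_right cinner_conj)

lemma bounded_op_adj:
  assumes T: "bounded_op T"
  shows "bounded_op (adj T)"
proof -
  let ?S = "adj T"
  have add: "?S (x + y) = ?S x + ?S y" for x y
    by (rule cinner_ext) (simp add: cinner_adj_right[OF T, symmetric] cinner_add_right)
  have scale: "?S (cscale a x) = cscale a (?S x)" for a x
    by (rule cinner_ext) (simp add: cinner_adj_right[OF T, symmetric] cinner_cscale_right)
  obtain K where K: "\<And>x. norm (T x) \<le> norm x * K" "K > 0"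
    using bounded_op_pos_bound[OF T] by blast
  have bound: "norm (?S y) \<le> norm y * K" for y
  proof -
    have "(norm (?S y))\<^sup>2 = Re (cinner (T (?S y)) y)"
      by (simp add: cinner_self cinner_adj_right[OF T])
    also have "\<dots> \<le> norm (T (?S y)) * norm y" by (rule Re_cinner_le)
    also have "\<dots> \<le> norm (?S y) * K * norm y" using K by (simp add: mult_right_mono)
    finally have "norm (?S y) * norm (?S y) \<le> norm (?S y) * (norm y * K)"
      by (simp add: power2_eq_square mult_ac)
    then show ?thesis using K by (cases "?S y = 0") auto
  qed
  show ?thesis unfolding bounded_op_def
    using scale by (auto intro!: bounded_linear_intro[where K=K] add bound simp: cscale_of_real[symmetric])
qed

lemma adj_adj: "bounded_op T \<Longrightarrow> adj (adj T) = T"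
  by (rule adj_unique) (metis cinner_adj_right cinner_conj)

lemma adj_comp: "bounded_op S \<Longrightarrow> bounded_op T \<Longrightarrow> adj (S \<circ> T) = adj T \<circ> adj S"
  by (rule adj_unique) (simp add: cinner_adj_right)

definition selfadjoint :: "('h::chilbert \<Rightarrow> 'h) \<Rightarrow> bool" where
  "selfadjoint T \<longleftrightarrow> (\<forall>x y. cinner (T x) y = cinner x (T y))"

lemma adj_selfadjoint: "selfadjoint T \<Longrightarrow> adj T = T"
  unfolding selfadjoint_def by (rule adj_unique) blast

lemma selfadjoint_if_adj_eq: "bounded_op T \<Longrightarrow> adj T = T \<Longrightarrow> selfadjoint T"
  unfolding selfadjoint_def by (metis cinner_adj_right)


context
  fixes V :: "'h::chilbert set"
  assumes V: "csubspace V" "closed V"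
begin

lemma oproj_eq_self: "v \<in> V \<Longrightarrow> oproj V v = v"
  by (rule oproj_eqI[OF V(1)]) auto

lemma oproj_idem: "oproj V (oproj V h) = oproj V h"
  by (rule oproj_eq_self[OF oproj_in[OF V]])

lemma bounded_op_oproj: "bounded_op (oproj V)"
proof -
  let ?P = "oproj V"
  have add: "?P (x + y) = ?P x + ?P y" for x y
  proof (rule oproj_eqI[OF V(1)])
    show "?P x + ?P y \<in> V" using oproj_in[OF V] V by (simp add: csubspace_def)
    show "cinner v (x + y - (?P x + ?P y)) = 0" if "v \<in> V" for v
      using oproj_orthogonal[OF V that, of x] oproj_orthogonal[OF V that, of y]
      by (simp add: cinner_diff_right cinner_add_right)
  qed
  have scale: "?P (cscale a x) = cscale a (?P x)" for a x
  proof (rule oproj_eqI[OF V(1)])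
    show "cscale a (?P x) \<in> V" using oproj_in[OF V] V by (simp add: csubspace_def)
    show "cinner v (cscale a x - cscale a (?P x)) = 0" if "v \<in> V" for v
      using oproj_orthogonal[OF V that] by (simp add: cscale_diff_right[symmetric] cinner_cscale_right)
  qed
  have bound: "norm (?P h) \<le> norm h * 1" for h
  proof -
    have "(norm h)\<^sup>2 = (norm (?P h))\<^sup>2 + (norm (h - ?P h))\<^sup>2"
      using power2_norm_add[of "?P h" "h - ?P h"] oproj_orthogonal[OF V oproj_in[OF V]] by simp
    then have "(norm (?P h))\<^sup>2 \<le> (norm h)\<^sup>2" by simp
    then show ?thesis by (simp add: power2_le_iff_abs_le)
  qed
  show ?thesis unfolding bounded_op_def
    using scale by (auto intro!: bounded_linear_intro[where K=1] add bound
        simp: cscale_of_real[symmetric])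
qed

lemma selfadjoint_oproj: "selfadjoint (oproj V)"
  unfolding selfadjoint_def
proof (intro allI)
  fix x y
  have "cinner (oproj V x) y = cinner (oproj V x) (oproj V y)"
    using oproj_orthogonal[OF V oproj_in[OF V], of x y] by (simp add: cinner_diff_right)
  moreover have "cinner x (oproj V y) = cinner (oproj V x) (oproj V y)"
    using oproj_orthogonal[OF V oproj_in[OF V], of y x]
    by (subst (asm) cinner_conj) (simp add: cinner_diff_left)
  ultimately show "cinner (oproj V x) y = cinner x (oproj V y)" by simp
qed

lemma oproj_commute:
  assumes T: "bounded_op T" and TV: "\<And>v. v \<in> V \<Longrightarrow> T v \<in> V"
    and adjTV: "\<And>v. v \<in> V \<Longrightarrow> adj T v \<in> V"
  shows "oproj V (T h) = T (oproj V h)"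
proof (rule oproj_eqI[OF V(1)])
  show "T (oproj V h) \<in> V" by (rule TV[OF oproj_in[OF V]])
  show "cinner v (T h - T (oproj V h)) = 0" if "v \<in> V" for v
    using oproj_orthogonal[OF V adjTV[OF that]]
    by (simp add: bounded_op_linear[OF T, symmetric] cinner_adj_left[OF T])
qed

end


lemma selfadjoint_if_positive:
  assumes a: "bounded_op a" and p: "positive_op a"
  shows "selfadjoint a"
  unfolding selfadjoint_def
proof (intro allI)
  fix x y
  define A where "A = cinner x (a y)"
  define B where "B = cinner y (a x)"
  have real: "Im (cinner h (a h)) = 0" for h using p by (simp add: positive_op_def)
  have "cinner (x + y) (a (x + y)) = cinner x (a x) + cinner y (a y) + A + B"
    using a by (simp add: bounded_op_linear cinner_add_left cinner_add_right A_def B_def)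
  then have "Im (A + B) = 0" using real[of "x + y"] real[of x] real[of y] by simp
  moreover have "cinner (x + cscale \<i> y) (a (x + cscale \<i> y))
      = cinner x (a x) + cinner y (a y) + \<i> * A - \<i> * B"
    using a by (simp add: bounded_op_linear cinner_add_left cinner_add_right cinner_cscale_left
        cinner_cscale_right A_def B_def algebra_simps)
  then have "Re (A - B) = 0" using real[of "x + cscale \<i> y"] real[of x] real[of y] by simp
  ultimately have "A = cnj B" by (simp add: complex_eq_iff)
  then show "cinner (a x) y = cinner x (a y)" by (subst cinner_conj) (simp add: A_def B_def)
qed

lemma positive_Cauchy_Schwarz:
  assumes a: "bounded_op a" and p: "positive_op a"
  shows "(cmod (cinner x (a y)))\<^sup>2 \<le> Re (cinner x (a x)) * Re (cinner y (a y))"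
proof (cases "cinner x (a y) = 0")
  case True
  then show ?thesis using p by (simp add: positive_op_def)
next
  case False
  define w where "w = cinner x (a y)"
  define u where "u = cnj w / of_real (cmod w)"
  define y' where "y' = cscale u y"
  have u1: "cnj u * u = 1" using False
    by (simp add: u_def w_def divide_simps complex_norm_square[symmetric] power2_eq_square)
  have "u * w = of_real (cmod w)"
    using False complex_norm_square[of w] by (simp add: u_def w_def field_simps power2_eq_square)
  then have wy': "cinner x (a y') = of_real (cmod w)"
    using a by (simp add: y'_def bounded_op_linear cinner_cscale_right w_def)
  then have yx': "cinner y' (a x) = of_real (cmod w)"
    using selfadjoint_if_positive[OF a p] unfolding selfadjoint_def
    by (metis cinner_conj complex_cnj_complex_of_real)
  have yy': "cinner y' (a y') = cinner y (a y)"
    using a by (simp add: y'_def bounded_op_linear cinner_cscale_right cinner_cscale_left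
        mult.assoc[symmetric] u1 mult.commute[of u "cnj u"])
  have "(cmod w)\<^sup>2 \<le> Re (cinner x (a x)) * Re (cinner y (a y))"
  proof (rule quadratic_nonneg_imp_discriminant_le)
    fix s :: real
    have "0 \<le> Re (cinner (x - s *\<^sub>R y') (a (x - s *\<^sub>R y')))"
      using p by (simp add: positive_op_def)
    also have "cinner (x - s *\<^sub>R y') (a (x - s *\<^sub>R y')) =
        cinner x (a x) - of_real s * cinner x (a y') - of_real s * cinner y' (a x)
        + of_real s * of_real s * cinner y' (a y')"
      using a by (simp add: bounded_op_linear cinner_diff_left cinner_diff_right
          cinner_scaleR_left cinner_scaleR_right algebra_simps)
    finally show "0 \<le> Re (cinner x (a x)) - 2 * s * cmod w + s\<^sup>2 * Re (cinner y (a y))"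
      using wy' yx' yy' by (simp add: power2_eq_square)
  next
    show "0 \<le> Re (cinner y (a y))" using p by (simp add: positive_op_def)
  qed
  then show ?thesis by (simp add: w_def)
qed

lemma positive_op_apply_eq_0:
  assumes a: "bounded_op a" and p: "positive_op a" and h: "cinner h (a h) = 0"
  shows "a h = 0"
  using positive_Cauchy_Schwarz[OF a p, of "a h" h] h by simp

lemma positive_op_norm_le:
  assumes a: "bounded_op a" and p: "positive_op a"
    and r: "\<And>h. Re (cinner h (a h)) \<le> r * (norm h)\<^sup>2" and r0: "0 \<le> r"
  shows "norm (a h) \<le> r * norm h"
proof -
  have "(cmod (cinner (a h) (a h)))\<^sup>2 \<le> Re (cinner (a h) (a (a h))) * Re (cinner h (a h))"
    by (rule positive_Cauchy_Schwarz[OF a p])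
  also have "\<dots> \<le> (r * (norm (a h))\<^sup>2) * (r * (norm h)\<^sup>2)"
    using p r r0 by (intro mult_mono) (auto simp: positive_op_def)
  finally have "(norm (a h))\<^sup>2 * (norm (a h))\<^sup>2 \<le> (norm (a h))\<^sup>2 * (r * norm h)\<^sup>2"
    by (simp add: cinner_self power2_eq_square mult_ac norm_mult)
  then have "(norm (a h))\<^sup>2 \<le> (r * norm h)\<^sup>2" if "a h \<noteq> 0"
    by (rule mult_left_le_imp_le) (use that in simp)
  then show ?thesis using r0 by (cases "a h = 0") (simp_all add: power2_le_iff_abs_le)
qed

section \<open>Power series of bounded operators\<close>

lemma blinfun_compose_sum_sum:
  fixes f g :: "'i \<Rightarrow> ('a::real_normed_vector \<Rightarrow>\<^sub>L 'a)"
  shows "(\<Sum>i\<in>A. f i) o\<^sub>L (\<Sum>j\<in>B. g j) = (\<Sum>(i,j)\<in>A \<times> B. f i o\<^sub>L g j)"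
  by (subst bounded_bilinear.sum_left[OF bounded_bilinear_blinfun_compose])
    (simp add: bounded_bilinear.sum_right[OF bounded_bilinear_blinfun_compose] sum.cartesian_product)

lemma square_minus_triangle_sum_Zfun:
  fixes f :: "nat \<times> nat \<Rightarrow> real"
  assumes f_nonneg: "\<And>x. 0 \<le> f x" and conv: "convergent (\<lambda>n. sum f ({..<n} \<times> {..<n}))"
  shows "Zfun (\<lambda>n. sum f ({..<n} \<times> {..<n} - {(i,j). i + j < n})) sequentially"
proof (rule ZfunI, simp only: eventually_sequentially real_norm_def)
  let ?S1 = "\<lambda>n::nat. {..<n} \<times> {..<n}"
  let ?S2 = "\<lambda>n::nat. {(i,j). i + j < n}"
  have S1_mono: "\<And>m n. m \<le> n \<Longrightarrow> ?S1 m \<subseteq> ?S1 n" by auto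
  have finite_S1: "\<And>n. finite (?S1 n)" by simp
  have abs_sum: "\<And>A. \<bar>sum f A\<bar> = sum f A" by (simp add: f_nonneg sum_nonneg)
  fix r :: real
  assume r: "0 < r"
  from CauchyD[OF convergent_Cauchy[OF conv] r] obtain N
    where Cauchy: "\<forall>m\<ge>N. \<forall>n\<ge>N. norm (sum f (?S1 m) - sum f (?S1 n)) < r" ..
  have N: "sum f (?S1 m - ?S1 n) < r" if "N \<le> n" "n \<le> m" for m n
  proof -
    have "sum f (?S1 m - ?S1 n) = sum f (?S1 m) - sum f (?S1 n)"
      using that by (simp add: sum_diff S1_mono)
    also have "\<dots> \<le> norm (sum f (?S1 m) - sum f (?S1 n))" by simp
    also have "\<dots> < r" using Cauchy that(1) le_trans[OF that] by blast
    finally show ?thesis .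
  qed
  show "\<exists>N. \<forall>n\<ge>N. \<bar>sum f (?S1 n - ?S2 n)\<bar> < r"
  proof (intro exI allI impI)
    fix n
    assume "2 * N \<le> n"
    then have n: "N \<le> n div 2" by simp
    have "sum f (?S1 n - ?S2 n) \<le> sum f (?S1 n - ?S1 (n div 2))"
      by (intro sum_mono2 finite_Diff finite_S1 f_nonneg Diff_mono subset_refl) auto
    also have "\<dots> < r" using n div_le_dividend by (rule N)
    finally show "\<bar>sum f (?S1 n - ?S2 n)\<bar> < r" by (simp add: abs_sum)
  qed
qed

(* The argument of Cauchy_product_sums; it is repeated because bounded operators are not an
   instance of real_normed_algebra. *)

lemma blinfun_Cauchy_product_sums:
  fixes a b :: "nat \<Rightarrow> ('a::banach \<Rightarrow>\<^sub>L 'a)"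
  assumes a: "summable (\<lambda>k. norm (a k))" and b: "summable (\<lambda>k. norm (b k))"
  shows "(\<lambda>k. \<Sum>i\<le>k. a i o\<^sub>L b (k - i)) sums ((\<Sum>k. a k) o\<^sub>L (\<Sum>k. b k))"
proof -
  let ?S1 = "\<lambda>n::nat. {..<n} \<times> {..<n}"
  let ?S2 = "\<lambda>n::nat. {(i,j). i + j < n}"
  let ?g = "\<lambda>(i,j). a i o\<^sub>L b j"
  let ?f = "\<lambda>(i,j). norm (a i) * norm (b j)"
  have "(\<lambda>n. (\<Sum>k<n. a k) o\<^sub>L (\<Sum>k<n. b k)) \<longlonglongrightarrow> ((\<Sum>k. a k) o\<^sub>L (\<Sum>k. b k))"
    by (intro bounded_bilinear.tendsto[OF bounded_bilinear_blinfun_compose]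
        summable_LIMSEQ summable_norm_cancel[OF a] summable_norm_cancel[OF b])
  then have square: "(\<lambda>n. sum ?g (?S1 n)) \<longlonglongrightarrow> ((\<Sum>k. a k) o\<^sub>L (\<Sum>k. b k))"
    by (simp only: blinfun_compose_sum_sum)
  have "(\<lambda>n. (\<Sum>k<n. norm (a k)) * (\<Sum>k<n. norm (b k))) \<longlonglongrightarrow> (\<Sum>k. norm (a k)) * (\<Sum>k. norm (b k))"
    using a b by (intro tendsto_mult summable_LIMSEQ)
  then have "convergent (\<lambda>n. sum ?f (?S1 n))"
    by (simp only: sum_product sum.Sigma[rule_format] finite_lessThan convergentI)
  then have Zfun_f: "Zfun (\<lambda>n. sum ?f (?S1 n - ?S2 n)) sequentially"
    by (intro square_minus_triangle_sum_Zfun) auto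
  have bound: "norm (sum ?g A) \<le> norm (sum ?f A)" for A
  proof -
    have "norm (sum ?g A) \<le> sum ?f A"
      by (rule order_trans[OF norm_sum sum_mono]) (auto simp: norm_blinfun_compose)
    then show ?thesis by simp
  qed
  have "Zfun (\<lambda>n. sum ?g (?S1 n - ?S2 n)) sequentially"
    by (rule Zfun_le[OF Zfun_f]) (intro allI bound)
  then have "(\<lambda>n. sum ?g (?S1 n) - sum ?g (?S2 n)) \<longlonglongrightarrow> 0"
    unfolding tendsto_Zfun_iff diff_0_right by (simp add: sum_diff subset_iff)
  with square have "(\<lambda>n. sum ?g (?S2 n)) \<longlonglongrightarrow> ((\<Sum>k. a k) o\<^sub>L (\<Sum>k. b k))"
    by (rule Lim_transform2)
  then show ?thesis by (simp only: sums_def sum.triangle_reindex)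
qed

fun blinfun_pow :: "('a::real_normed_vector \<Rightarrow>\<^sub>L 'a) \<Rightarrow> nat \<Rightarrow> ('a \<Rightarrow>\<^sub>L 'a)" where
  "blinfun_pow B 0 = id_blinfun"
| "blinfun_pow B (Suc n) = B o\<^sub>L blinfun_pow B n"

lemma norm_blinfun_pow: "norm (blinfun_pow B n) \<le> (norm B) ^ n"
proof (induction n)
  case 0 then show ?case using norm_blinfun_id_le by simp
next
  case (Suc n)
  have "norm (blinfun_pow B (Suc n)) \<le> norm B * norm (blinfun_pow B n)" by (simp add: norm_blinfun_compose)
  also have "\<dots> \<le> norm B * norm B ^ n" using Suc by (simp add: mult_left_mono)
  finally show ?case by simp
qed

lemma blinfun_pow_apply_add: "blinfun_apply (blinfun_pow B i) (blinfun_apply (blinfun_pow B j) x) = blinfun_apply (blinfun_pow B (i + j)) x"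
  by (induction i) auto

lemma blinfun_pow_add: "blinfun_pow B i o\<^sub>L blinfun_pow B j = blinfun_pow B (i + j)"
  by (rule blinfun_eqI) (simp add: blinfun_pow_apply_add)

lemma blinfun_pow_commute:
  assumes "bounded_linear L" "\<And>h. L (blinfun_apply B h) = blinfun_apply B (L h)"
  shows "L (blinfun_apply (blinfun_pow B n) h) = blinfun_apply (blinfun_pow B n) (L h)"
  by (induction n arbitrary: h) (auto simp: assms)

definition blinfun_series :: "(nat \<Rightarrow> real) \<Rightarrow> ('a::real_normed_vector \<Rightarrow>\<^sub>L 'a) \<Rightarrow> ('a \<Rightarrow>\<^sub>L 'a)" where
  "blinfun_series c B = (\<Sum>n. c n *\<^sub>R blinfun_pow B n)"

definition coeff_conv :: "(nat \<Rightarrow> real) \<Rightarrow> (nat \<Rightarrow> real) \<Rightarrow> nat \<Rightarrow> real" where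
  "coeff_conv c d k = (\<Sum>i\<le>k. c i * d (k - i))"

lemma blinfun_series_summable_norm:
  assumes "summable (\<lambda>n. \<bar>c n\<bar> * norm B ^ n)"
  shows "summable (\<lambda>n. norm (c n *\<^sub>R blinfun_pow B n))"
  by (rule summable_comparison_test[OF _ assms])
    (auto intro!: exI[of _ 0] mult_left_mono norm_blinfun_pow)

lemma blinfun_series_apply:
  fixes B :: "'a::banach \<Rightarrow>\<^sub>L 'a"
  assumes "summable (\<lambda>n. \<bar>c n\<bar> * norm B ^ n)"
  shows "blinfun_apply (blinfun_series c B) h = (\<Sum>n. c n *\<^sub>R blinfun_apply (blinfun_pow B n) h)"
    "summable (\<lambda>n. c n *\<^sub>R blinfun_apply (blinfun_pow B n) h)"
proof -
  have s: "summable (\<lambda>n. c n *\<^sub>R blinfun_pow B n)"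
    using summable_norm_cancel[OF blinfun_series_summable_norm[OF assms]] .
  have bl: "bounded_linear (\<lambda>F::'a \<Rightarrow>\<^sub>L 'a. blinfun_apply F h)"
    by (rule bounded_bilinear.bounded_linear_left[OF bounded_bilinear_blinfun_apply])
  show "blinfun_apply (blinfun_series c B) h = (\<Sum>n. c n *\<^sub>R blinfun_apply (blinfun_pow B n) h)"
    unfolding blinfun_series_def using bounded_linear.suminf[OF bl s] by (simp add: blinfun.scaleR_left)
  show "summable (\<lambda>n. c n *\<^sub>R blinfun_apply (blinfun_pow B n) h)"
    using bounded_linear.summable[OF bl s] by (simp add: blinfun.scaleR_left)
qed

lemma blinfun_series_compose:
  fixes B :: "'a::banach \<Rightarrow>\<^sub>L 'a"
  assumes c: "summable (\<lambda>n. \<bar>c n\<bar> * norm B ^ n)" and d: "summable (\<lambda>n. \<bar>d n\<bar> * norm B ^ n)"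
  shows "(\<lambda>k. coeff_conv c d k *\<^sub>R blinfun_pow B k) sums (blinfun_series c B o\<^sub>L blinfun_series d B)"
proof -
  have "(\<lambda>k. \<Sum>i\<le>k. (c i *\<^sub>R blinfun_pow B i) o\<^sub>L (d (k - i) *\<^sub>R blinfun_pow B (k - i))) sums (blinfun_series c B o\<^sub>L blinfun_series d B)"
    unfolding blinfun_series_def
    by (rule blinfun_Cauchy_product_sums[OF blinfun_series_summable_norm[OF c] blinfun_series_summable_norm[OF d]])
  moreover have "(\<Sum>i\<le>k. (c i *\<^sub>R blinfun_pow B i) o\<^sub>L (d (k - i) *\<^sub>R blinfun_pow B (k - i))) = coeff_conv c d k *\<^sub>R blinfun_pow B k" for k
  proof -
    have "(c i *\<^sub>R blinfun_pow B i) o\<^sub>L (d (k - i) *\<^sub>R blinfun_pow B (k - i)) = (c i * d (k - i)) *\<^sub>R blinfun_pow B k"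
      if "i \<le> k" for i
      using that blinfun_pow_add[of B i "k - i"]
      by (simp add: bounded_bilinear.scaleR_left[OF bounded_bilinear_blinfun_compose]
          bounded_bilinear.scaleR_right[OF bounded_bilinear_blinfun_compose])
    then show ?thesis unfolding coeff_conv_def scaleR_sum_left by (intro sum.cong) auto
  qed
  ultimately show ?thesis by simp
qed

lemma blinfun_pow_sums_finite:
  fixes B :: "'a::banach \<Rightarrow>\<^sub>L 'a"
  assumes "\<And>n. n \<ge> 2 \<Longrightarrow> c n = 0"
  shows "(\<lambda>k. c k *\<^sub>R blinfun_pow B k) sums (c 0 *\<^sub>R id_blinfun + c 1 *\<^sub>R B)"
proof -
  have "(\<lambda>k. c k *\<^sub>R blinfun_pow B k) sums (\<Sum>k\<in>{0,1}. c k *\<^sub>R blinfun_pow B k)"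
    by (rule sums_finite) (use assms in \<open>auto simp: not_less_eq_eq\<close>)
  moreover have "B o\<^sub>L id_blinfun = B" by (rule blinfun_eqI) simp
  ultimately show ?thesis by simp
qed

lemma blinfun_series_commute:
  fixes B :: "'a::banach \<Rightarrow>\<^sub>L 'a"
  assumes c: "summable (\<lambda>n. \<bar>c n\<bar> * norm B ^ n)"
    and L: "bounded_linear L" "\<And>h. L (blinfun_apply B h) = blinfun_apply B (L h)"
  shows "L (blinfun_apply (blinfun_series c B) h) = blinfun_apply (blinfun_series c B) (L h)"
proof -
  have "L (blinfun_apply (blinfun_series c B) h) = (\<Sum>n. L (c n *\<^sub>R blinfun_apply (blinfun_pow B n) h))"
    unfolding blinfun_series_apply(1)[OF c] by (rule bounded_linear.suminf[OF L(1) blinfun_series_apply(2)[OF c]])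
  also have "\<dots> = (\<Sum>n. c n *\<^sub>R blinfun_apply (blinfun_pow B n) (L h))"
    by (simp add: linear_scale[OF bounded_linear.linear[OF L(1)]] blinfun_pow_commute[OF L])
  also have "\<dots> = blinfun_apply (blinfun_series c B) (L h)" by (simp add: blinfun_series_apply(1)[OF c])
  finally show ?thesis .
qed


(* Taylor coefficients of sqrt (1 - t). *)
definition sqrt_coeff :: "nat \<Rightarrow> real" where
  "sqrt_coeff n = (-1)^n * ((1/2) gchoose n)"

lemma sqrt_coeff_0[simp]: "sqrt_coeff 0 = 1" by (simp add: sqrt_coeff_def)

lemma sqrt_coeff_Suc: "sqrt_coeff (Suc n) = sqrt_coeff n * (real n - 1/2) / (real n + 1)"
proof -
  define g where "g = ((1/2::real) gchoose n)"
  define g' where "g' = ((1/2::real) gchoose (Suc n))"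
  have nz: "real n + 1 \<noteq> 0" by (simp add: add_nonneg_eq_0_iff)
  have E: "(1/2) * g = real n * g + (real n + 1) * g'"
    using gbinomial_mult_1[of "1/2::real" n] by (simp add: g_def g'_def algebra_simps)
  then have "(real n + 1) * g' = (1/2 - real n) * g" by (simp add: algebra_simps)
  then have g'eq: "g' = (1/2 - real n) * g / (real n + 1)" using nz by (simp add: field_simps)
  have "sqrt_coeff (Suc n) = - ((-1)^n * g')" by (simp add: sqrt_coeff_def g'_def)
  also have "\<dots> = - ((-1)^n * ((1/2 - real n) * g / (real n + 1)))" using g'eq by simp
  also have "\<dots> = ((-1)^n * g) * (real n - 1/2) / (real n + 1)" using nz by (simp add: field_simps)
  also have "(-1)^n * g = sqrt_coeff n" by (simp add: sqrt_coeff_def g_def)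
  finally show ?thesis .
qed

lemma coeff_conv_sqrt_coeff: "coeff_conv sqrt_coeff sqrt_coeff k = (if k = 0 then 1 else if k = 1 then -1 else 0)"
proof -
  have pt: "sqrt_coeff i * sqrt_coeff (k - i) = (-1)^k * (((1/2::real) gchoose i) * ((1/2) gchoose (k - i)))"
    if "i \<le> k" for i
  proof -
    have "(-1::real)^i * (-1)^(k-i) = (-1)^k" using that by (simp add: power_add[symmetric])
    then show ?thesis unfolding sqrt_coeff_def by (metis (no_types, lifting) mult.assoc mult.left_commute)
  qed
  have "coeff_conv sqrt_coeff sqrt_coeff k = (\<Sum>i\<le>k. (-1)^k * (((1/2::real) gchoose i) * ((1/2) gchoose (k - i))))"
    unfolding coeff_conv_def by (rule sum.cong[OF refl]) (simp add: pt)
  also have "\<dots> = (-1)^k * ((1::real) gchoose k)"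
    using gbinomial_Vandermonde[of "1/2::real" "1/2" k]
    by (simp add: sum_distrib_left[symmetric] atLeast0AtMost)
  also have "\<dots> = (if k = 0 then 1 else if k = 1 then -1 else 0)"
  proof -
    have "(1::real) gchoose k = of_nat (1 choose k)" by (simp add: binomial_gbinomial)
    then show ?thesis by (cases k) (auto simp: binomial_eq_0)
  qed
  finally show ?thesis .
qed

lemma sqrt_coeff_partial_sum:
  "0 < (\<Sum>n\<le>N. sqrt_coeff n) \<and> sqrt_coeff (Suc N) = - (\<Sum>n\<le>N. sqrt_coeff n) / (2 * (real N + 1))"
proof (induction N)
  case 0 then show ?case by (simp add: sqrt_coeff_Suc)
next
  case (Suc N)
  let ?P = "\<Sum>n\<le>N. sqrt_coeff n"
  let ?s = "sqrt_coeff (Suc N)"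
  have nz: "real N + 1 \<noteq> 0" "real N + 2 \<noteq> 0" by (simp_all add: add_nonneg_eq_0_iff)
  have s1: "?P = - 2 * (real N + 1) * ?s" using Suc nz by (simp add: field_simps)
  have "0 < ?P / (2 * (real N + 1))" using Suc by (intro divide_pos_pos) auto
  then have sneg: "?s < 0" using Suc by simp
  have sumS: "(\<Sum>n\<le>Suc N. sqrt_coeff n) = - (2 * real N + 1) * ?s" using s1 by (simp add: algebra_simps)
  have s2: "sqrt_coeff (Suc (Suc N)) = ?s * (real N + 1/2) / (real N + 2)"
    using sqrt_coeff_Suc[of "Suc N"] by (simp add: algebra_simps)
  have "0 < (\<Sum>n\<le>Suc N. sqrt_coeff n)" unfolding sumS using sneg
    by (intro mult_neg_neg) auto
  moreover have "sqrt_coeff (Suc (Suc N)) = - (\<Sum>n\<le>Suc N. sqrt_coeff n) / (2 * (real (Suc N) + 1))"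
    unfolding sumS s2 using nz by (simp add: field_simps)
  ultimately show ?case by blast
qed

lemma sqrt_coeff_Suc_nonpos: "sqrt_coeff (Suc n) \<le> 0"
  using sqrt_coeff_partial_sum[of n] by (simp add: divide_nonneg_pos)

lemma sum_abs_sqrt_coeff: "(\<Sum>n\<le>N. \<bar>sqrt_coeff n\<bar>) = 2 - (\<Sum>n\<le>N. sqrt_coeff n)"
proof (induction N)
  case 0 then show ?case by simp
next
  case (Suc N) then show ?case using sqrt_coeff_Suc_nonpos[of N] by simp
qed

lemma summable_abs_sqrt_coeff: "summable (\<lambda>n. \<bar>sqrt_coeff n\<bar>)"
proof (rule summableI_nonneg_bounded[where x=2])
  fix n
  show "(\<Sum>i<n. \<bar>sqrt_coeff i\<bar>) \<le> 2"
  proof (cases n)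
    case 0 then show ?thesis by simp
  next
    case (Suc N)
    then have "{..<n} = {..N}" by auto
    then show ?thesis using sum_abs_sqrt_coeff[of N] sqrt_coeff_partial_sum[of N] by simp
  qed
qed simp

lemma summable_sqrt_coeff: "summable sqrt_coeff"
  using summable_rabs_cancel[OF summable_abs_sqrt_coeff] .

lemma suminf_sqrt_coeff_nonneg: "0 \<le> suminf sqrt_coeff"
proof -
  have "(\<lambda>n. \<Sum>i<n. sqrt_coeff i) \<longlonglongrightarrow> suminf sqrt_coeff"
    using summable_LIMSEQ[OF summable_sqrt_coeff] .
  moreover have "\<forall>n\<ge>1. 0 \<le> (\<Sum>i<n. sqrt_coeff i)"
  proof (intro allI impI)
    fix n :: nat assume "1 \<le> n"
    then obtain N where "n = Suc N" by (cases n) auto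
    then have "{..<n} = {..N}" by auto
    then show "0 \<le> (\<Sum>i<n. sqrt_coeff i)" using sqrt_coeff_partial_sum[of N] by simp
  qed
  ultimately show ?thesis by (intro LIMSEQ_le_const) auto
qed


lemma sqrt_coeff_summable_norm:
  assumes "norm B \<le> 1"
  shows "summable (\<lambda>n. \<bar>sqrt_coeff n\<bar> * norm B ^ n)"
  by (rule summable_comparison_test[OF _ summable_abs_sqrt_coeff])
    (auto intro!: exI[of _ 0] mult_left_le simp: power_le_one assms abs_mult)

section \<open>Square roots of positive operators\<close>

lemma blinfun_apply_Blinfun_op: "bounded_op B \<Longrightarrow> blinfun_apply (Blinfun B) = B"
  by (simp add: bounded_op_def bounded_linear_Blinfun_apply)

lemma blinfun_pow_selfadjoint:
  assumes "bounded_op B" "selfadjoint B"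
  shows "cinner (blinfun_apply (blinfun_pow (Blinfun B) n) x) y
       = cinner x (blinfun_apply (blinfun_pow (Blinfun B) n) y)"
proof (induction n arbitrary: x y)
  case 0
  then show ?case by simp
next
  case (Suc n)
  have "blinfun_apply (blinfun_pow (Blinfun B) n) (B y) = B (blinfun_apply (blinfun_pow (Blinfun B) n) y)"
    for y using blinfun_pow_apply_add[of "Blinfun B" n 1 y] blinfun_pow_apply_add[of "Blinfun B" 1 n y]
    by (simp add: blinfun_apply_Blinfun_op[OF assms(1)] add.commute)
  then show ?case
    using Suc assms(2) by (simp add: blinfun_apply_Blinfun_op[OF assms(1)] selfadjoint_def)
qed

lemma Im_cinner_blinfun_pow:
  assumes "bounded_op B" "selfadjoint B"
  shows "Im (cinner h (blinfun_apply (blinfun_pow (Blinfun B) n) h)) = 0"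
proof -
  let ?Bn = "blinfun_apply (blinfun_pow (Blinfun B) n) h"
  have "cinner h ?Bn = cnj (cinner h ?Bn)"
    using cinner_conj[of h ?Bn] blinfun_pow_selfadjoint[OF assms, of n h h] by simp
  from arg_cong[OF this, of Im] show ?thesis by simp
qed

lemma norm_blinfun_pow_le_1: "norm B \<le> 1 \<Longrightarrow> norm (blinfun_pow B n) \<le> 1"
  using norm_blinfun_pow[of B n] power_le_one[OF norm_ge_zero] by (rule order_trans)

lemma Re_cinner_blinfun_le:
  fixes T :: "'h::chilbert \<Rightarrow>\<^sub>L 'h"
  assumes "norm T \<le> 1"
  shows "Re (cinner h (blinfun_apply T h)) \<le> (norm h)\<^sup>2"
proof -
  have "Re (cinner h (blinfun_apply T h)) \<le> norm h * norm (blinfun_apply T h)"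
    by (rule Re_cinner_le)
  also have "norm (blinfun_apply T h) \<le> norm h"
    using norm_blinfun[of T h] mult_right_mono[OF assms norm_ge_zero[of h]] by simp
  finally show ?thesis by (simp add: power2_eq_square mult_left_mono)
qed

lemma sqrt_series_square:
  fixes B :: "'a::banach \<Rightarrow>\<^sub>L 'a"
  assumes "norm B \<le> 1"
  shows "blinfun_series sqrt_coeff B o\<^sub>L blinfun_series sqrt_coeff B = id_blinfun - B"
proof -
  note summable = sqrt_coeff_summable_norm[OF assms]
  have "(\<lambda>k. coeff_conv sqrt_coeff sqrt_coeff k *\<^sub>R blinfun_pow B k) sums
      (blinfun_series sqrt_coeff B o\<^sub>L blinfun_series sqrt_coeff B)"
    by (rule blinfun_series_compose[OF summable summable])
  moreover have "(\<lambda>k. coeff_conv sqrt_coeff sqrt_coeff k *\<^sub>R blinfun_pow B k) sums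
      (coeff_conv sqrt_coeff sqrt_coeff 0 *\<^sub>R id_blinfun + coeff_conv sqrt_coeff sqrt_coeff 1 *\<^sub>R B)"
    by (rule blinfun_pow_sums_finite) (simp add: coeff_conv_sqrt_coeff)
  ultimately show ?thesis
    using sums_unique2 by (fastforce simp: coeff_conv_sqrt_coeff)
qed

lemma sqrt_series_positive:
  fixes B :: "'h::chilbert \<Rightarrow> 'h"
  assumes B: "bounded_op B" "positive_op B" and norm: "norm (Blinfun B) \<le> 1"
  shows "positive_op (blinfun_apply (blinfun_series sqrt_coeff (Blinfun B)))"
  unfolding positive_op_def
proof
  fix h
  let ?Bn = "\<lambda>n. blinfun_apply (blinfun_pow (Blinfun B) n) h"
  define X where "X n = cinner h (sqrt_coeff n *\<^sub>R ?Bn n)" for n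
  note summable = sqrt_coeff_summable_norm[OF norm]
  have sums: "X sums cinner h (blinfun_apply (blinfun_series sqrt_coeff (Blinfun B)) h)"
    unfolding X_def blinfun_series_apply(1)[OF summable]
    by (intro bounded_linear.sums[OF bounded_linear_cinner_right]
        summable_sums blinfun_series_apply(2)[OF summable])
  have real: "Im (cinner h (?Bn n)) = 0" for n
    using Im_cinner_blinfun_pow[OF B(1) selfadjoint_if_positive[OF B]] .
  have "(\<lambda>n. Im (X n)) sums Im (cinner h (blinfun_apply (blinfun_series sqrt_coeff (Blinfun B)) h))"
    by (rule bounded_linear.sums[OF bounded_linear_Im sums])
  moreover have "(\<lambda>n. Im (X n)) sums 0" by (simp add: X_def cinner_scaleR_right real)
  ultimately have Im_zero: "Im (cinner h (blinfun_apply (blinfun_series sqrt_coeff (Blinfun B)) h)) = 0"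
    by (rule sums_unique2)
  have "sqrt_coeff n * (norm h)\<^sup>2 \<le> Re (X n)" for n
  proof (cases n)
    case 0
    then show ?thesis by (simp add: X_def cinner_self)
  next
    case (Suc m)
    have "Re (cinner h (?Bn n)) \<le> (norm h)\<^sup>2"
      by (rule Re_cinner_blinfun_le[OF norm_blinfun_pow_le_1[OF norm]])
    moreover have "sqrt_coeff n \<le> 0" using sqrt_coeff_Suc_nonpos Suc by simp
    ultimately show ?thesis by (simp add: X_def cinner_scaleR_right mult_left_mono_neg)
  qed
  then have "suminf sqrt_coeff * (norm h)\<^sup>2
      \<le> Re (cinner h (blinfun_apply (blinfun_series sqrt_coeff (Blinfun B)) h))"
    by (rule sums_le[OF _ sums_mult2[OF summable_sums[OF summable_sqrt_coeff]]
          bounded_linear.sums[OF bounded_linear_Re sums]])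
  then have "0 \<le> Re (cinner h (blinfun_apply (blinfun_series sqrt_coeff (Blinfun B)) h))"
    by (rule order_trans[OF mult_nonneg_nonneg[OF suminf_sqrt_coeff_nonneg zero_le_power2]])
  with Im_zero show "Im (cinner h (blinfun_apply (blinfun_series sqrt_coeff (Blinfun B)) h)) = 0
      \<and> 0 \<le> Re (cinner h (blinfun_apply (blinfun_series sqrt_coeff (Blinfun B)) h))" by blast
qed

lemma sqrt_one_minus_exists:
  fixes B :: "'h::chilbert \<Rightarrow> 'h"
  assumes B: "bounded_op B" "positive_op B" and le: "\<And>h. Re (cinner h (B h)) \<le> (norm h)\<^sup>2"
  obtains S where "bounded_op S" "positive_op S" "\<And>h. S (S h) = h - B h"
    "\<And>L h. bounded_linear L \<Longrightarrow> (\<And>h. L (B h) = B (L h)) \<Longrightarrow> L (S h) = S (L h)"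
proof
  define S where "S = blinfun_apply (blinfun_series sqrt_coeff (Blinfun B))"
  have norm: "norm (Blinfun B) \<le> 1"
    by (rule norm_blinfun_bound)
      (use positive_op_norm_le[OF B, of 1] le in \<open>simp_all add: blinfun_apply_Blinfun_op[OF B(1)]\<close>)
  show comm: "L (S h) = S (L h)" if "bounded_linear L" "\<And>h. L (B h) = B (L h)" for L h
    unfolding S_def
    by (rule blinfun_series_commute[OF sqrt_coeff_summable_norm[OF norm] that(1)])
      (simp add: blinfun_apply_Blinfun_op[OF B(1)] that(2))
  show "bounded_op S"
    unfolding bounded_op_def
    using comm[OF bounded_linear_cscale] B(1)
    by (simp add: S_def bounded_op_linear blinfun.bounded_linear_right)
  show "positive_op S" unfolding S_def by (rule sqrt_series_positive[OF B norm])
  show "S (S h) = h - B h" for h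
    using arg_cong[OF sqrt_series_square[OF norm], of "\<lambda>F. blinfun_apply F h"]
    by (simp add: S_def blinfun.diff_left blinfun_apply_Blinfun_op[OF B(1)])
qed

lemma positive_op_adj_comp:
  assumes "bounded_op x"
  shows "positive_op (adj x \<circ> x)"
  unfolding positive_op_def
  by (simp add: cinner_adj_left[OF bounded_op_adj[OF assms], symmetric] adj_adj[OF assms] cinner_self)

lemma positive_op_one_minus_scaled:
  assumes c: "positive_op c" and K: "\<And>x. norm (c x) \<le> norm x * K" "K > 0"
  shows "positive_op (\<lambda>h. h - (1 / K) *\<^sub>R c h)"
    and "Re (cinner h (h - (1 / K) *\<^sub>R c h)) \<le> (norm h)\<^sup>2"
proof -
  have c_le: "Re (cinner h (c h)) \<le> K * (norm h)\<^sup>2" for h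
  proof -
    have "Re (cinner h (c h)) \<le> norm h * norm (c h)" by (rule Re_cinner_le)
    also have "\<dots> \<le> norm h * (norm h * K)" using K by (simp add: mult_left_mono)
    finally show ?thesis by (simp add: power2_eq_square mult_ac)
  qed
  have inner: "cinner h (h - (1 / K) *\<^sub>R c h) = of_real ((norm h)\<^sup>2) - of_real (1 / K) * cinner h (c h)"
    for h by (simp add: cinner_diff_right cinner_scaleR_right cinner_self)
  show "positive_op (\<lambda>h. h - (1 / K) *\<^sub>R c h)"
    "Re (cinner h (h - (1 / K) *\<^sub>R c h)) \<le> (norm h)\<^sup>2"
    using c c_le K(2) by (auto simp: positive_op_def inner divide_le_eq mult.commute)
qed

lemma positive_sqrt_exists:
  fixes c :: "'h::chilbert \<Rightarrow> 'h"
  assumes c: "bounded_op c" "positive_op c"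
  obtains S where "bounded_op S" "positive_op S" "\<And>h. S (S h) = c h"
    "\<And>L h. bounded_linear L \<Longrightarrow> (\<And>h. L (c h) = c (L h)) \<Longrightarrow> L (S h) = S (L h)"
proof -
  obtain K where K: "\<And>x. norm (c x) \<le> norm x * K" "K > 0"
    using bounded_op_pos_bound[OF c(1)] by blast
  define B where "B h = h - (1 / K) *\<^sub>R c h" for h
  have bB: "bounded_op B"
    using c(1) unfolding bounded_op_def B_def
    by (auto intro!: bounded_linear_sub bounded_linear_ident
        bounded_linear_compose[OF bounded_linear_scaleR_right]
        simp: cscale_diff_right cscale_scaleR_commute)
  have "positive_op B" "Re (cinner h (B h)) \<le> (norm h)\<^sup>2" for h
    unfolding B_def by (rule positive_op_one_minus_scaled[OF c(2) K])+
  then obtain S0 where S0: "bounded_op S0" "positive_op S0" "\<And>h. S0 (S0 h) = h - B h"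
    "\<And>L h. bounded_linear L \<Longrightarrow> (\<And>h. L (B h) = B (L h)) \<Longrightarrow> L (S0 h) = S0 (L h)"
    using sqrt_one_minus_exists[OF bB] by blast
  show ?thesis
  proof
    define S where "S h = sqrt K *\<^sub>R S0 h" for h
    show "bounded_op S"
      using S0(1) unfolding bounded_op_def S_def
      by (auto intro!: bounded_linear_compose[OF bounded_linear_scaleR_right]
          simp: cscale_scaleR_commute)
    show "positive_op S"
      using S0(2) K by (simp add: positive_op_def S_def cinner_scaleR_right)
    show "S (S h) = c h" for h
      using S0(1) K by (simp add: S_def bounded_op_linear S0(3) B_def)
    show "L (S h) = S (L h)" if L: "bounded_linear L" "\<And>h. L (c h) = c (L h)" for L h
    proof -
      have "L (B h) = B (L h)" for h
        using L by (simp add: B_def linear_diff linear_scale bounded_linear.linear)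
      then show ?thesis using S0(4)[OF L(1)] L(1) by (simp add: S_def linear_scale bounded_linear.linear)
    qed
  qed
qed

lemma commuting_positive_sqrt_unique:
  assumes a: "bounded_op a" "positive_op a" and b: "bounded_op b" "positive_op b"
    and sq: "\<And>h. a (a h) = b (b h)" and comm: "\<And>h. a (b h) = b (a h)"
  shows "a = b"
proof
  fix h
  define g where "g = a h - b h"
  have "a g + b g = 0"
    using a(1) b(1) sq comm by (simp add: g_def bounded_op_linear)
  then have "cinner g (a g) + cinner g (b g) = 0"
    by (metis cinner_add_right cinner_zero_right)
  moreover have "Im (cinner g (a g)) = 0" "0 \<le> Re (cinner g (a g))"
    "Im (cinner g (b g)) = 0" "0 \<le> Re (cinner g (b g))"
    using a(2) b(2) by (auto simp: positive_op_def)
  ultimately have "cinner g (a g) = 0" "cinner g (b g) = 0"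
    by (auto simp: complex_eq_iff)
  then have "a g = 0" "b g = 0" using positive_op_apply_eq_0 a b by blast+
  moreover have "cinner g g = cinner h (a g) - cinner h (b g)"
    using selfadjoint_if_positive[OF a] selfadjoint_if_positive[OF b]
    by (simp add: g_def cinner_diff_left selfadjoint_def)
  ultimately show "a h = b h" by (simp add: g_def)
qed

lemma positive_sqrt_unique:
  assumes a: "bounded_op a" "positive_op a" and b: "bounded_op b" "positive_op b"
    and sq: "\<And>h. a (a h) = b (b h)"
  shows "a = b"
proof -
  have "positive_op (a \<circ> a)"
    using positive_op_adj_comp[OF a(1)] adj_selfadjoint[OF selfadjoint_if_positive[OF a]] by simp
  then obtain S where S: "bounded_op S" "positive_op S" "\<And>h. S (S h) = a (a h)"
    "\<And>L h. bounded_linear L \<Longrightarrow> (\<And>h. L (a (a h)) = a (a (L h))) \<Longrightarrow> L (S h) = S (L h)"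
    using positive_sqrt_exists[of "a \<circ> a"] bounded_op_comp[OF a(1) a(1)] by auto
  have "y = S" if y: "bounded_op y" "positive_op y" "\<And>h. y (y h) = a (a h)" for y
  proof (rule commuting_positive_sqrt_unique[OF y(1,2) S(1,2)])
    show "y (y h) = S (S h)" for h by (simp add: y(3) S(3))
    have "y (a (a h)) = a (a (y h))" for h by (metis y(3))
    then show "y (S h) = S (y h)" for h
      using S(4) y(1) by (simp add: bounded_op_def)
  qed
  then show ?thesis using a b sq by metis
qed

section \<open>Von Neumann algebras\<close>

locale vn_algebra =
  fixes M :: "('h::chilbert \<Rightarrow> 'h) set"
  assumes von_neumann: "von_neumann_algebra M"
begin

lemma bounded_op_if_in: "T \<in> M \<Longrightarrow> bounded_op T"
  using von_neumann by (simp add: von_neumann_algebra_def)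

lemma comp_in: "S \<in> M \<Longrightarrow> T \<in> M \<Longrightarrow> S \<circ> T \<in> M"
  using von_neumann by (simp add: von_neumann_algebra_def)

lemma adj_in: "T \<in> M \<Longrightarrow> adj T \<in> M"
  using von_neumann by (simp add: von_neumann_algebra_def)

lemma bounded_op_if_in_commutant: "T \<in> commutant M \<Longrightarrow> bounded_op T"
  by (simp add: commutant_def)

lemma commutant_commute: "T \<in> commutant M \<Longrightarrow> A \<in> M \<Longrightarrow> T (A h) = A (T h)"
  unfolding commutant_def by (metis (mono_tags, lifting) comp_apply mem_Collect_eq)

lemma adj_in_commutant:
  assumes T: "T \<in> commutant M"
  shows "adj T \<in> commutant M"
  unfolding commutant_def
proof (intro CollectI conjI ballI)
  have bT: "bounded_op T" by (rule bounded_op_if_in_commutant[OF T])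
  show "bounded_op (adj T)" by (rule bounded_op_adj[OF bT])
  fix A assume A: "A \<in> M"
  have bA: "bounded_op A" by (rule bounded_op_if_in[OF A])
  have "T \<circ> adj A = adj A \<circ> T" using T adj_in[OF A] by (auto simp: fun_eq_iff commutant_commute)
  then have "adj (adj A \<circ> T) = adj (T \<circ> adj A)" by simp
  then show "adj T \<circ> A = A \<circ> adj T"
    by (simp add: adj_comp bounded_op_adj bA bT adj_adj)
qed

lemma in_if_commutes_with_commutant:
  assumes "bounded_op S" "\<And>T h. T \<in> commutant M \<Longrightarrow> T (S h) = S (T h)"
  shows "S \<in> M"
proof -
  have "S \<in> commutant (commutant M)"
    unfolding commutant_def[of "commutant M"] using assms by (auto simp: fun_eq_iff)
  then show ?thesis using von_neumann by (simp add: von_neumann_algebra_def)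
qed


lemma
  assumes x: "x \<in> M"
  shows absv_in: "absv M x \<in> M"
    and positive_absv: "positive_op (absv M x)"
    and absv_comp_absv: "absv M x \<circ> absv M x = adj x \<circ> x"
    and absv_commute: "bounded_linear L \<Longrightarrow> (\<And>h. L (adj x (x h)) = adj x (x (L h)))
      \<Longrightarrow> L (absv M x h) = absv M x (L h)"
proof -
  have bx: "bounded_op x" by (rule bounded_op_if_in[OF x])
  obtain S where S: "bounded_op S" "positive_op S" "\<And>h. S (S h) = adj x (x h)"
    "\<And>L h. bounded_linear L \<Longrightarrow> (\<And>h. L (adj x (x h)) = adj x (x (L h))) \<Longrightarrow> L (S h) = S (L h)"
    using positive_sqrt_exists[OF bounded_op_comp[OF bounded_op_adj[OF bx] bx]
        positive_op_adj_comp[OF bx]] by auto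
  have SM: "S \<in> M"
  proof (rule in_if_commutes_with_commutant[OF S(1)])
    fix T h assume T: "T \<in> commutant M"
    show "T (S h) = S (T h)"
      using S(4) bounded_op_if_in_commutant[OF T]
      by (simp add: bounded_op_def commutant_commute[OF T x] commutant_commute[OF T adj_in[OF x]])
  qed
  have absv_eq: "absv M x = S"
    unfolding absv_def
  proof (rule the_equality)
    show "S \<in> M \<and> positive_op S \<and> S \<circ> S = adj x \<circ> x" using SM S by (auto simp: fun_eq_iff)
    show "a = S" if "a \<in> M \<and> positive_op a \<and> a \<circ> a = adj x \<circ> x" for a
      using that S by (intro positive_sqrt_unique) (auto simp: bounded_op_if_in fun_eq_iff)
  qed
  show "absv M x \<in> M" "positive_op (absv M x)" "absv M x \<circ> absv M x = adj x \<circ> x"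
    "bounded_linear L \<Longrightarrow> (\<And>h. L (adj x (x h)) = adj x (x (L h))) \<Longrightarrow> L (absv M x h) = absv M x (L h)"
    unfolding absv_eq using SM S by (auto simp: fun_eq_iff)
qed

lemma adj_absv: "x \<in> M \<Longrightarrow> adj (absv M x) = absv M x"
  by (intro adj_selfadjoint selfadjoint_if_positive bounded_op_if_in absv_in positive_absv)

lemma norm_absv:
  assumes x: "x \<in> M"
  shows "norm (absv M x h) = norm (x h)"
proof -
  have "cinner (absv M x h) (absv M x h) = cinner h (adj x (x h))"
    using adj_absv[OF x] cinner_adj_left[OF bounded_op_if_in[OF absv_in[OF x]]]
    by (simp add: comp_eq_dest_lhs[OF absv_comp_absv[OF x]])
  also have "\<dots> = cinner (x h) (x h)"
    by (simp add: cinner_adj_left[OF bounded_op_adj[OF bounded_op_if_in[OF x]], symmetric]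
        adj_adj bounded_op_if_in[OF x])
  finally have "(norm (absv M x h))\<^sup>2 = (norm (x h))\<^sup>2"
    by (metis cinner_self of_real_eq_iff)
  then show ?thesis by (simp add: power2_eq_iff_nonneg)
qed

lemma comp_eq_self_iff_absv:
  assumes x: "x \<in> M" and e: "bounded_op e"
  shows "x \<circ> e = x \<longleftrightarrow> absv M x \<circ> e = absv M x"
proof -
  have zero_iff: "f \<circ> e = f \<longleftrightarrow> (\<forall>h. f (h - e h) = 0)" if "bounded_op f" for f
    using that by (auto simp: fun_eq_iff bounded_op_linear)
  have "x (h - e h) = 0 \<longleftrightarrow> absv M x (h - e h) = 0" for h
    using norm_absv[OF x, of "h - e h"] by (metis norm_eq_zero)
  then show ?thesis
    using zero_iff[OF bounded_op_if_in[OF x]] zero_iff[OF bounded_op_if_in[OF absv_in[OF x]]] by simp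
qed

lemma
  assumes "e \<in> projections M"
  shows projection_in: "e \<in> M" and adj_projection: "adj e = e" and projection_idem: "e \<circ> e = e"
  using assms by (auto simp: projections_def)

lemma bounded_op_projection: "e \<in> projections M \<Longrightarrow> bounded_op e"
  by (intro bounded_op_if_in projection_in)

lemma selfadjoint_projection: "e \<in> projections M \<Longrightarrow> selfadjoint e"
  by (intro selfadjoint_if_adj_eq bounded_op_projection adj_projection)

lemma projection_eqI:
  assumes e: "e \<in> projections M" and e': "e' \<in> projections M"
    and "e \<circ> e' = e'" "e' \<circ> e = e"
  shows "e = e'"
proof -
  have "e = adj (e' \<circ> e)" using assms by (simp add: adj_projection)
  also have "\<dots> = e \<circ> e'" by (simp add: adj_comp bounded_op_projection adj_projection e e')
  finally show ?thesis using assms by simp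
qed

lemma oproj_in_projections:
  assumes V: "csubspace V" "closed V"
    and invariant: "\<And>T v. T \<in> commutant M \<Longrightarrow> v \<in> V \<Longrightarrow> T v \<in> V"
  shows "oproj V \<in> projections M"
proof -
  have "oproj V \<in> M"
  proof (rule in_if_commutes_with_commutant[OF bounded_op_oproj[OF V]])
    fix T h assume "T \<in> commutant M"
    then show "T (oproj V h) = oproj V (T h)"
      using oproj_commute[OF V] bounded_op_if_in_commutant adj_in_commutant invariant by metis
  qed
  then show ?thesis
    using adj_selfadjoint[OF selfadjoint_oproj[OF V]] oproj_idem[OF V]
    by (simp add: projections_def fun_eq_iff)
qed

text \<open>The left support of z is the projection onto the closure of its range, written as the
  double orthogonal complement of the range.\<close>

lemma lsupp_exists:
  assumes z: "z \<in> M"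
  shows "\<exists>e\<in>projections M. e \<circ> z = z \<and> (\<forall>f\<in>projections M. f \<circ> z = z \<longrightarrow> f \<circ> e = e)"
proof -
  define K where "K = {k. \<forall>w. cinner k (z w) = 0}"
  define V where "V = {h. \<forall>k\<in>K. cinner k h = 0}"
  have V: "csubspace V" "closed V"
    unfolding V_def by (rule csubspace_orthogonal_complement closed_orthogonal_complement)+
  have zV: "z w \<in> V" for w by (simp add: V_def K_def)
  have "oproj V \<in> projections M"
  proof (rule oproj_in_projections[OF V])
    fix T v assume T: "T \<in> commutant M" and v: "v \<in> V"
    have bT: "bounded_op T" by (rule bounded_op_if_in_commutant[OF T])
    have "adj T k \<in> K" if "k \<in> K" for k
      using that by (simp add: K_def cinner_adj_left[OF bT] commutant_commute[OF T z])
    then show "T v \<in> V"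
      using v by (simp add: V_def cinner_adj_left[OF bT, symmetric])
  qed
  moreover have "oproj V \<circ> z = z" using oproj_eq_self[OF V zV] by (auto simp: fun_eq_iff)
  moreover have "f \<circ> oproj V = oproj V" if f: "f \<in> projections M" "f \<circ> z = z" for f
  proof -
    have f_sa: "selfadjoint f" by (rule selfadjoint_projection[OF f(1)])
    have "f v = v" if v: "v \<in> V" for v
    proof -
      define k where "k = v - f v"
      have "cinner (f v) (z w) = cinner v (z w)" for w
        using f_sa comp_eq_dest_lhs[OF f(2)] by (simp add: selfadjoint_def)
      then have "k \<in> K" by (simp add: K_def k_def cinner_diff_left)
      then have kv: "cinner k v = 0" using v by (simp add: V_def)
      have "f k = 0"
        using comp_eq_dest_lhs[OF projection_idem[OF f(1)]] bounded_op_projection[OF f(1)]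
        by (simp add: k_def bounded_op_linear)
      then have "cinner k (f v) = 0" using f_sa by (metis selfadjoint_def cinner_zero_left)
      with kv have "cinner k k = 0" by (simp add: k_def cinner_diff_right)
      then show ?thesis by (simp add: k_def)
    qed
    then show ?thesis using oproj_in[OF V] by (auto simp: fun_eq_iff)
  qed
  ultimately show ?thesis by blast
qed

lemma
  assumes "z \<in> M"
  shows lsupp_in_projections: "lsupp M z \<in> projections M"
    and lsupp_comp: "lsupp M z \<circ> z = z"
proof -
  obtain e where e: "e \<in> projections M" "e \<circ> z = z"
    "\<And>f. f \<in> projections M \<Longrightarrow> f \<circ> z = z \<Longrightarrow> f \<circ> e = e"
    using lsupp_exists[OF assms] by blast
  have "lsupp M z = e"
    unfolding lsupp_def
    by (rule the_equality) (use e projection_eqI in blast)+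
  then show "lsupp M z \<in> projections M" "lsupp M z \<circ> z = z" using e by auto
qed

lemma lsupp_eqI:
  assumes e: "e \<in> projections M" and zw: "z \<circ> w = e" and ez: "e \<circ> z = z"
  shows "lsupp M z = e"
  unfolding lsupp_def
proof (rule the_equality)
  have "f \<circ> e = e" if "f \<circ> z = z" for f
    using that zw by (metis comp_assoc)
  then show "e \<in> projections M \<and> e \<circ> z = z \<and> (\<forall>f\<in>projections M. f \<circ> z = z \<longrightarrow> f \<circ> e = e)"
    using e ez by blast
  fix e' assume e': "e' \<in> projections M \<and> e' \<circ> z = z \<and> (\<forall>f\<in>projections M. f \<circ> z = z \<longrightarrow> f \<circ> e' = e')"
  have "e' \<circ> e = e" using e' zw by (metis comp_assoc)
  moreover have "e \<circ> e' = e'" using e' e ez by blast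
  ultimately show "e' = e" using projection_eqI e e' by metis
qed

lemma rsupp_eqI:
  assumes e: "e \<in> projections M" and wz: "w \<circ> z = e" and ze: "z \<circ> e = z"
  shows "rsupp M z = e"
  unfolding rsupp_def
proof (rule the_equality)
  have below: "f \<circ> e = e" if f: "f \<in> projections M" "z \<circ> f = z" for f
  proof -
    have "e \<circ> f = e" using wz f(2) by (metis comp_assoc)
    then have "adj (e \<circ> f) = e" using adj_projection[OF e] by simp
    then show ?thesis
      by (simp add: adj_comp bounded_op_projection adj_projection e f(1))
  qed
  then show "e \<in> projections M \<and> z \<circ> e = z \<and> (\<forall>f\<in>projections M. z \<circ> f = z \<longrightarrow> f \<circ> e = e)"
    using e ze by blast
  fix e' assume e': "e' \<in> projections M \<and> z \<circ> e' = z \<and> (\<forall>f\<in>projections M. z \<circ> f = z \<longrightarrow> f \<circ> e' = e')"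
  have "e \<circ> e' = e'" using e' e ze by blast
  moreover have "e' \<circ> e = e" using below e' by blast
  ultimately show "e' = e" using projection_eqI e e' by metis
qed

end

section \<open>Moore--Penrose inverses and the groupoid of partially invertible elements\<close>

definition moore_penrose_inverse :: "('h::chilbert \<Rightarrow> 'h) set \<Rightarrow> ('h \<Rightarrow> 'h) \<Rightarrow> ('h \<Rightarrow> 'h) \<Rightarrow> bool" where
  "moore_penrose_inverse M x y \<longleftrightarrow> x \<in> M \<and> y \<in> M \<and> x \<circ> y \<in> projections M \<and> y \<circ> x \<in> projections M
     \<and> x \<circ> y \<circ> x = x \<and> y \<circ> x \<circ> y = y"

lemma moore_penrose_inverse_sym: "moore_penrose_inverse M x y \<Longrightarrow> moore_penrose_inverse M y x"
  by (auto simp: moore_penrose_inverse_def)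

lemma moore_penrose_inverse_apply:
  assumes "moore_penrose_inverse M x y"
  shows "x (y (x h)) = x h" "y (x (y h)) = y h"
  using assms by (auto simp: moore_penrose_inverse_def fun_eq_iff)

lemma corner_inv_eqI:
  assumes b: "is_inverse_in_corner M p a b" and p: "p \<circ> p = p"
  shows "corner_inv M p a = b"
  unfolding corner_inv_def
proof (rule the_equality)
  show "is_inverse_in_corner M p a b" by (rule b)
  have absorb: "c (p h) = c h" "p (c h) = c h" if "p \<circ> c \<circ> p = c" for c h
    using p that by (metis comp_apply)+
  fix c assume c: "is_inverse_in_corner M p a c"
  show "c = b"
  proof
    fix h
    have "c h = c (p h)" using absorb(1)[of c h] c by (simp add: is_inverse_in_corner_def)
    also have "\<dots> = c (a (b h))" using b by (simp add: is_inverse_in_corner_def fun_eq_iff)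
    also have "\<dots> = p (b h)" using c by (simp add: is_inverse_in_corner_def fun_eq_iff)
    also have "\<dots> = b h" using absorb(2)[of b h] b by (simp add: is_inverse_in_corner_def)
    finally show "c h = b h" .
  qed
qed

context vn_algebra
begin

lemma
  assumes "moore_penrose_inverse M x y"
  shows rsupp_moore_penrose: "rsupp M x = y \<circ> x"
    and lsupp_moore_penrose: "lsupp M x = x \<circ> y"
  using assms rsupp_eqI lsupp_eqI by (auto simp: moore_penrose_inverse_def comp_assoc)

lemma moore_penrose_inverse_projection:
  "e \<in> projections M \<Longrightarrow> moore_penrose_inverse M e e"
  by (simp add: moore_penrose_inverse_def projection_in projection_idem)

lemma moore_penrose_inverse_comp:
  assumes xy: "moore_penrose_inverse M x y" and xy': "moore_penrose_inverse M x' y'"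
    and composable: "y \<circ> x = x' \<circ> y'"
  shows "moore_penrose_inverse M (x \<circ> x') (y' \<circ> y)"
    and "(x \<circ> x') \<circ> (y' \<circ> y) = x \<circ> y" "(y' \<circ> y) \<circ> (x \<circ> x') = y' \<circ> x'"
proof -
  have composable': "y (x h) = x' (y' h)" for h using comp_eq_dest_lhs[OF composable] by simp
  note inv = moore_penrose_inverse_apply[OF xy] moore_penrose_inverse_apply[OF xy']
  show xx'yy: "(x \<circ> x') \<circ> (y' \<circ> y) = x \<circ> y"
    by (simp add: fun_eq_iff composable'[symmetric] inv)
  show yyxx': "(y' \<circ> y) \<circ> (x \<circ> x') = y' \<circ> x'"
    by (simp add: fun_eq_iff composable' inv)
  have "(x \<circ> x') \<circ> (y' \<circ> y) \<circ> (x \<circ> x') = x \<circ> x'"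
    by (simp add: fun_eq_iff composable'[symmetric] inv)
  moreover have "(y' \<circ> y) \<circ> (x \<circ> x') \<circ> (y' \<circ> y) = y' \<circ> y"
    by (simp add: fun_eq_iff composable' inv)
  ultimately show "moore_penrose_inverse M (x \<circ> x') (y' \<circ> y)"
    using xy xy' xx'yy yyxx' unfolding moore_penrose_inverse_def by (simp add: comp_in)
qed

lemma moore_penrose_inverse_gram:
  assumes zw: "moore_penrose_inverse M z w"
  shows "adj z (z (w (adj w h))) = w (z h)" and "w (adj w (adj z (z h))) = w (z h)"
proof -
  have z: "z \<in> M" and w: "w \<in> M" and e: "w \<circ> z \<in> projections M" and f: "z \<circ> w \<in> projections M"
    using zw by (auto simp: moore_penrose_inverse_def)
  note inv = moore_penrose_inverse_apply[OF zw]
  have "adj w \<circ> adj z = z \<circ> w"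
    using adj_comp[OF bounded_op_if_in[OF z] bounded_op_if_in[OF w]] adj_projection[OF f] by simp
  then have adj_zw: "adj w (adj z h) = z (w h)" for h using comp_eq_dest_lhs by fastforce
  have "adj z \<circ> adj w = w \<circ> z"
    using adj_comp[OF bounded_op_if_in[OF w] bounded_op_if_in[OF z]] adj_projection[OF e] by simp
  then have adj_wz: "adj z (adj w h) = w (z h)" for h using comp_eq_dest_lhs by fastforce
  have "adj z (z (w (adj w h))) = adj z (adj w (adj z (adj w h)))" by (simp add: adj_zw)
  also have "\<dots> = w (z h)" by (simp add: adj_wz inv)
  finally show "adj z (z (w (adj w h))) = w (z h)" .
  show "w (adj w (adj z (z h))) = w (z h)" by (simp add: adj_zw inv)
qed

lemma partially_invertible_if_moore_penrose:
  assumes zw: "moore_penrose_inverse M z w"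
  shows "z \<in> partially_invertible M"
proof -
  define e a d where "e = w \<circ> z" and "a = absv M z" and "d = w \<circ> adj w"
  have z: "z \<in> M" and w: "w \<in> M" and e: "e \<in> projections M"
    using zw by (auto simp: moore_penrose_inverse_def e_def)
  note inv = moore_penrose_inverse_apply[OF zw]
  have cd: "adj z (z (d h)) = e h" and dc: "d (adj z (z h)) = e h" for h
    using moore_penrose_inverse_gram[OF zw] by (simp_all add: d_def e_def)
  have dM: "d \<in> M" unfolding d_def by (intro comp_in adj_in w)
  have da: "d (a h) = a (d h)" for h
    unfolding a_def
    by (rule absv_commute[OF z]) (use bounded_op_if_in[OF dM] in \<open>simp_all add: bounded_op_def cd dc\<close>)
  have a_comp_e: "a \<circ> e = a"
    using comp_eq_self_iff_absv[OF z bounded_op_projection[OF e]] inv by (simp add: a_def e_def fun_eq_iff)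
  have e_comp_a: "e \<circ> a = a"
    using arg_cong[OF a_comp_e, of adj] adj_absv[OF z]
    by (simp add: adj_comp a_def bounded_op_if_in absv_in z bounded_op_projection e adj_projection)
  define b where "b = a \<circ> d"
  have aa: "a (a h) = adj z (z h)" for h
    using comp_eq_dest_lhs[OF absv_comp_absv[OF z]] by (simp add: a_def)
  have ab: "a \<circ> b = e" by (simp add: fun_eq_iff b_def aa cd)
  have ba: "b \<circ> a = e" by (simp add: fun_eq_iff b_def da aa cd)
  have eb: "e \<circ> b = b" using e_comp_a by (simp add: b_def comp_assoc[symmetric])
  have "b \<circ> e = (b \<circ> a) \<circ> b" by (simp add: ab[symmetric] comp_assoc)
  then have be: "b \<circ> e = b" by (simp add: ba eb)
  have "supp M a = e" unfolding supp_def by (rule lsupp_eqI[OF e ab e_comp_a])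
  moreover have "b \<in> M" unfolding b_def a_def by (intro comp_in absv_in z dM)
  ultimately have "is_inverse_in_corner M (supp M a) a b"
    using ab ba eb be by (simp add: is_inverse_in_corner_def)
  then show ?thesis using z by (auto simp: partially_invertible_def a_def)
qed

lemma comp_eq_self_if_adj_comp_eq:
  assumes u: "bounded_op u" and uu: "adj u \<circ> u = e" and e: "e \<in> projections M"
  shows "u \<circ> e = u"
proof
  fix h
  define k where "k = h - e h"
  have "e k = 0"
    using projection_idem[OF e] bounded_op_projection[OF e]
    by (simp add: k_def bounded_op_linear comp_eq_dest_lhs[of e e e])
  then have "cinner (u k) (u k) = 0"
    using uu by (simp add: cinner_adj_right[OF u] comp_eq_dest_lhs[of "adj u" u e])
  then show "(u \<circ> e) h = u h" using u by (simp add: k_def bounded_op_linear)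
qed

lemma polar_eqI:
  assumes x: "x \<in> M" and u: "u \<in> M" "x = u \<circ> absv M x" "adj u \<circ> u = rsupp M x"
    "u \<circ> adj u = lsupp M x"
    and r: "rsupp M x \<in> projections M" and right_inv: "absv M x \<circ> b = rsupp M x"
  shows "polar M x = u"
proof -
  have unique: "v = x \<circ> b" if v: "v \<in> M" "x = v \<circ> absv M x" "adj v \<circ> v = rsupp M x" for v
  proof -
    have "v = v \<circ> rsupp M x"
      using comp_eq_self_if_adj_comp_eq[OF bounded_op_if_in[OF v(1)] v(3) r] by simp
    also have "\<dots> = (v \<circ> absv M x) \<circ> b" by (simp add: right_inv[symmetric] comp_assoc)
    also have "\<dots> = x \<circ> b" by (simp only: v(2)[symmetric])
    finally show ?thesis .
  qed
  have "u = x \<circ> b" by (rule unique) (fact u)+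
  show ?thesis
    unfolding polar_def
  proof (rule the_equality)
    show "u \<in> M \<and> x = u \<circ> absv M x \<and> adj u \<circ> u = rsupp M x \<and> u \<circ> adj u = lsupp M x"
      using u by blast
    fix v assume "v \<in> M \<and> x = v \<circ> absv M x \<and> adj v \<circ> v = rsupp M x \<and> v \<circ> adj v = lsupp M x"
    then have "v = x \<circ> b" by (intro unique) blast+
    with \<open>u = x \<circ> b\<close> show "v = u" by simp
  qed
qed

context
  fixes x a p b
  assumes x: "x \<in> M" and a_def: "a = absv M x" and p_def: "p = supp M a"
    and corner_inverse: "is_inverse_in_corner M p a b"
begin

lemma
  shows corner_unit: "p \<in> projections M"
    and corner_unit_comp_absv: "p \<circ> a = a"
    and absv_comp_corner_unit: "a \<circ> p = a"
proof -
  show p: "p \<in> projections M" and pa: "p \<circ> a = a"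
    using lsupp_in_projections lsupp_comp absv_in[OF x] by (simp_all add: p_def a_def supp_def)
  have "adj (p \<circ> a) = adj a" by (simp add: pa)
  then show "a \<circ> p = a"
    using adj_absv[OF x] by (simp add: adj_comp a_def bounded_op_if_in absv_in x
        bounded_op_projection p adj_projection)
qed

lemma
  shows corner_inverse_in: "b \<in> M"
    and corner_inverse_absv: "b \<circ> a = p" "a \<circ> b = p"
    and corner_unit_comp_inverse: "p \<circ> b = b" "b \<circ> p = b"
proof -
  have pbp: "p \<circ> b \<circ> p = b" and p: "p \<circ> p = p"
    using corner_inverse projection_idem[OF corner_unit] by (simp_all add: is_inverse_in_corner_def)
  show "b \<in> M" "b \<circ> a = p" "a \<circ> b = p"
    using corner_inverse by (simp_all add: is_inverse_in_corner_def)
  show "p \<circ> b = b" "b \<circ> p = b"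
    by (metis pbp p comp_assoc)+
qed

lemma adj_corner_inverse: "adj b = b"
proof -
  have bb: "bounded_op b" by (rule bounded_op_if_in[OF corner_inverse_in])
  have ba: "bounded_op a" by (simp add: a_def bounded_op_if_in absv_in x)
  have bp: "bounded_op p" by (rule bounded_op_projection[OF corner_unit])
  have "adj b \<circ> a = p"
    using adj_comp[OF ba bb] adj_absv[OF x] corner_inverse_absv(2) adj_projection[OF corner_unit]
    by (simp add: a_def)
  moreover have "adj b \<circ> p = adj b"
    using adj_comp[OF bp bb] corner_unit_comp_inverse(1) adj_projection[OF corner_unit] by simp
  ultimately have "adj b = p \<circ> b"
    by (metis comp_assoc corner_inverse_absv(2))
  then show ?thesis by (simp add: corner_unit_comp_inverse)
qed

lemma comp_corner_unit: "x \<circ> p = x"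
  using comp_eq_self_iff_absv[OF x bounded_op_projection[OF corner_unit]] absv_comp_corner_unit
  by (simp add: a_def)

lemma corner_pseudo_inverse_comp: "(b \<circ> b \<circ> adj x) \<circ> x = p"
proof -
  have "(b \<circ> b \<circ> adj x) \<circ> x = b \<circ> ((b \<circ> a) \<circ> a)"
    by (simp add: a_def absv_comp_absv[OF x] comp_assoc)
  also have "\<dots> = p" by (simp add: corner_inverse_absv corner_unit_comp_absv)
  finally show ?thesis .
qed

lemma moore_penrose_inverse_from_corner: "moore_penrose_inverse M x (b \<circ> b \<circ> adj x)"
proof -
  let ?w = "b \<circ> b \<circ> adj x"
  have bx: "bounded_op x" by (rule bounded_op_if_in[OF x])
  have bb: "bounded_op b" by (rule bounded_op_if_in[OF corner_inverse_in])
  note wx = corner_pseudo_inverse_comp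
  have xw_idem: "(x \<circ> ?w) \<circ> (x \<circ> ?w) = x \<circ> ?w"
    using wx comp_corner_unit by (metis comp_assoc)
  have "adj (x \<circ> ?w) = x \<circ> ?w"
    by (simp add: adj_comp bx bb bounded_op_comp bounded_op_adj adj_adj adj_corner_inverse comp_assoc)
  then have "x \<circ> ?w \<in> projections M"
    using xw_idem by (simp add: projections_def comp_in adj_in x corner_inverse_in)
  moreover have "x \<circ> ?w \<circ> x = x"
    by (simp only: comp_assoc[of x ?w x] wx comp_corner_unit)
  moreover have "?w \<circ> x \<circ> ?w = ?w"
    using wx corner_unit_comp_inverse by (simp add: o_assoc)
  ultimately show ?thesis
    using wx corner_unit unfolding moore_penrose_inverse_def
    by (simp add: comp_in adj_in x corner_inverse_in)
qed

lemma pinv_from_corner: "pinv M x = b \<circ> b \<circ> adj x"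
proof -
  note mp = moore_penrose_inverse_from_corner
  have bx: "bounded_op x" by (rule bounded_op_if_in[OF x])
  have bb: "bounded_op b" by (rule bounded_op_if_in[OF corner_inverse_in])
  have rsupp: "rsupp M x = p"
    using rsupp_moore_penrose[OF mp] corner_pseudo_inverse_comp by simp
  have "corner_inv M p a = b"
    by (rule corner_inv_eqI[OF corner_inverse projection_idem[OF corner_unit]])
  moreover have "polar M x = x \<circ> b"
  proof (rule polar_eqI[OF x])
    show "x \<circ> b \<in> M" by (intro comp_in x corner_inverse_in)
    show "x = x \<circ> b \<circ> absv M x"
      using comp_corner_unit corner_inverse_absv by (simp add: a_def[symmetric] comp_assoc)
    have "adj (x \<circ> b) \<circ> (x \<circ> b) = b \<circ> (adj x \<circ> x) \<circ> b"
      by (simp add: adj_comp bx bb adj_corner_inverse comp_assoc)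
    also have "\<dots> = (b \<circ> a) \<circ> (a \<circ> b)"
      by (simp add: a_def absv_comp_absv[OF x, symmetric] comp_assoc)
    also have "\<dots> = rsupp M x"
      by (simp add: corner_inverse_absv projection_idem[OF corner_unit] rsupp)
    finally show "adj (x \<circ> b) \<circ> (x \<circ> b) = rsupp M x" .
    show "x \<circ> b \<circ> adj (x \<circ> b) = lsupp M x"
      by (simp add: lsupp_moore_penrose[OF mp] adj_comp bx bb adj_corner_inverse comp_assoc)
    show "rsupp M x \<in> projections M" by (simp add: rsupp corner_unit)
    show "absv M x \<circ> b = rsupp M x" using corner_inverse_absv by (simp add: rsupp a_def)
  qed
  ultimately show ?thesis
    by (simp add: pinv_def a_def[symmetric] p_def[symmetric] adj_comp bx bb adj_corner_inverse comp_assoc)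
qed

end

lemma moore_penrose_pinv:
  assumes "x \<in> partially_invertible M"
  shows "moore_penrose_inverse M x (pinv M x)"
proof -
  obtain b where "is_inverse_in_corner M (supp M (absv M x)) (absv M x) b"
    using assms by (auto simp: partially_invertible_def)
  with assms show ?thesis
    using moore_penrose_inverse_from_corner pinv_from_corner
    by (auto simp: partially_invertible_def)
qed

lemma
  assumes "g \<in> partially_invertible M"
  shows rsupp_eq_pinv_comp: "rsupp M g = pinv M g \<circ> g"
    and lsupp_eq_comp_pinv: "lsupp M g = g \<circ> pinv M g"
  using rsupp_moore_penrose lsupp_moore_penrose moore_penrose_pinv[OF assms] by auto

lemma
  assumes g: "g \<in> partially_invertible M"
  shows rsupp_partially_invertible: "rsupp M g \<in> projections M"
    and lsupp_partially_invertible: "lsupp M g \<in> projections M"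
    and lsupp_comp_partially_invertible: "lsupp M g \<circ> g = g"
    and comp_rsupp_partially_invertible: "g \<circ> rsupp M g = g"
  using moore_penrose_pinv[OF g]
  by (simp_all add: rsupp_eq_pinv_comp[OF g] lsupp_eq_comp_pinv[OF g] moore_penrose_inverse_def
      comp_assoc[symmetric])

lemma partially_invertible_comp:
  assumes g: "g \<in> partially_invertible M" and h: "h \<in> partially_invertible M"
    and composable: "rsupp M g = lsupp M h"
  shows "g \<circ> h \<in> partially_invertible M"
    and "rsupp M (g \<circ> h) = rsupp M h" "lsupp M (g \<circ> h) = lsupp M g"
proof -
  have "pinv M g \<circ> g = h \<circ> pinv M h"
    using composable by (simp add: rsupp_eq_pinv_comp[OF g] lsupp_eq_comp_pinv[OF h])
  from moore_penrose_inverse_comp[OF moore_penrose_pinv[OF g] moore_penrose_pinv[OF h] this]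
  show "g \<circ> h \<in> partially_invertible M"
    and "rsupp M (g \<circ> h) = rsupp M h" "lsupp M (g \<circ> h) = lsupp M g"
    by (simp_all add: rsupp_eq_pinv_comp[OF h] lsupp_eq_comp_pinv[OF g]
        partially_invertible_if_moore_penrose rsupp_moore_penrose lsupp_moore_penrose)
qed

lemma
  assumes "e \<in> projections M"
  shows projection_partially_invertible: "e \<in> partially_invertible M"
    and rsupp_projection: "rsupp M e = e"
    and lsupp_projection: "lsupp M e = e"
  using moore_penrose_inverse_projection[OF assms] projection_idem[OF assms]
  by (simp_all add: partially_invertible_if_moore_penrose rsupp_moore_penrose lsupp_moore_penrose)

lemma
  assumes g: "g \<in> partially_invertible M"
  shows pinv_partially_invertible: "pinv M g \<in> partially_invertible M"
    and rsupp_pinv: "rsupp M (pinv M g) = lsupp M g"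
    and lsupp_pinv: "lsupp M (pinv M g) = rsupp M g"
  using moore_penrose_inverse_sym[OF moore_penrose_pinv[OF g]]
  by (simp_all add: rsupp_eq_pinv_comp[OF g] lsupp_eq_comp_pinv[OF g]
      partially_invertible_if_moore_penrose rsupp_moore_penrose lsupp_moore_penrose)

end

theorem proposition2p1:
  fixes M :: "('h::chilbert \<Rightarrow> 'h) set"
  assumes "von_neumann_algebra M"
  shows "groupoid (partially_invertible M) (projections M) (rsupp M) (lsupp M)
           (\<lambda>x y. x \<circ> y) (\<lambda>p. p) (pinv M)"
proof -
  interpret vn_algebra M by unfold_locales (rule assms)
  show ?thesis
    unfolding groupoid_def
    using rsupp_partially_invertible lsupp_partially_invertible
      partially_invertible_comp projection_partially_invertible rsupp_projection lsupp_projection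
      lsupp_comp_partially_invertible comp_rsupp_partially_invertible
      pinv_partially_invertible rsupp_pinv lsupp_pinv
      rsupp_eq_pinv_comp[symmetric] lsupp_eq_comp_pinv[symmetric]
    by (auto simp: comp_assoc)
qed

end
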